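(* For every $j\in\{1,2,3,4,5,6,7\}$ there exists a t-pair $(\mathcal{C},\psi)$ such that $\operatorname{typ}_u(\mathcal{C},\psi)=t_j$.
   Context: Let $\mathbb{N}=\{0,1,2,\dots\}$; for an integer $k\ge 2$ let $E_k=\{0,1,\dots,k-1\}$; let $\mathcal{P}(\mathbb{N})$ be the set of nonempty finite subsets of $\mathbb{N}$. Let $F$ be a nonempty set (of attribute names). A decision table $T\in\mathcal{M}_k(F)$ is a rectangular table with $n\ge 1$ columns labeled with attributes $f_1,\dots,f_n\in F$ (any two columns labeled with the same attribute are equal), whose rows are pairwise different tuples from $E_k^n$ (the set of rows may be empty), each row being labeled with a set of decisions from $\mathcal{P}(\mathbb{N})$. Write $At(T)=\{f_1,\dots,f_n\}$ and $\Delta(T)$ for the set of rows. For a word $\alpha=(f_{i_1},\delta_1)\cdots(f_{i_m},\delta_m)$ with $f_{i_j}\in At(T)$, $\delta_j\in E_k$, the subtable $T\alpha$ consists of the rows of $T$ having value $\delta_j$ in column $f_{i_j}$ for all $j$ ($T\lambda=T$ for the empty word $\lambda$). Operations on tables: (1) removal of a column from a table with at least two columns (if groups of equal rows appear, only the first row of each group, with its decision set, is kept); (2) changing of decisions: the decision sets attached to rows are replaced arbitrarily by sets from $\mathcal{P}(\mathbb{N})$; (3) permutation of columns: swap two columns together with their attribute labels; (4) duplication of columns: add a copy of a column (with its label) next to it. A set $\mathcal{C}\subseteq\mathcal{M}_k(F)$ is a closed class if every table obtained from a table of $\mathcal{C}$ by finitely many such operations belongs to $\mathcal{C}$. A decision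 tree over $\mathcal{M}_k(F)$ is a finite directed tree with a root (unique node with no entering edge) and at least two nodes such that the root and the edges leaving the root are unlabeled, each worker node (neither root nor terminal) is labeled with an attribute from $F$, each edge leaving a worker node is labeled with a number from $E_k$, and each terminal node is labeled with a number from $\mathbb{N}$. For a complete path $\xi$ (root to terminal node) whose worker nodes are labeled $f_{j_1},\dots,f_{j_m}$ in order, with the edges leaving them labeled $\delta_1,\dots,\delta_m$, put $\pi(\xi)=(f_{j_1},\delta_1)\cdots(f_{j_m},\delta_m)$, $\varphi(\xi)=f_{j_1}\cdots f_{j_m}$ (both empty if $m=0$), and let $\tau(\xi)$ be the label of its terminal node. A nondeterministic decision tree for $T$ is a decision tree $\Gamma$ whose worker-node attributes lie in $At(T)$, such that $\bigcup_{\xi}\Delta(T\pi(\xi))=\Delta(T)$ (union over complete paths), and for every row $r\in\Delta(T)$ and every complete path $\xi$ with $r\in\Delta(T\pi(\xi))$, $\tau(\xi)$ belongs to the decision set of $r$. A decision tree is deterministic if exactly one edge leaves the root and the edges leaving each worker node have pairwise different labels; a deterministic decision tree for $T$ is a deterministic decision tree that is a nondeterministic decision tree for $T$. A complexity measure over $\mathcal{M}_k(F)$ is any map $\psi:F^*\to\mathbb{N}$, where $F^*$ is the set of finite words over $F$ including the empty word $\lambda$. For a tree, $\psi(\Gamma)=\max_\xi\psi(\varphi(\xi))$ over complete paths. For $T$ with columns labeled $f_1,\dots,f_n$: $\psi^i(T)=\psi(f_1\cdots f_n)$, $\psi^d(T)$ is the minimum complexity of a deterministic decision tree for $T$, $\psi^a(T)$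 the minimum complexity of a nondeterministic decision tree for $T$. A t-pair $(\mathcal{C},\psi)$ consists of a closed class $\mathcal{C}\subseteq\mathcal{M}_k(F)$ and a complexity measure $\psi$ over $\mathcal{M}_k(F)$. For $b,c\in\{i,d,a\}$ define the partial function $\mathcal{U}^{bc}_{\mathcal{C}\psi}(n)=\max\{\psi^b(T):T\in\mathcal{C},\psi^c(T)\le n\}$ (defined iff this set is nonempty and finite). For a partial function $g:\mathbb{N}\to\mathbb{N}$ with domain $\mathrm{Dom}(g)$, let $\mathrm{Dom}^+(g)=\{n\in\mathrm{Dom}(g):g(n)\ge n\}$, $\mathrm{Dom}^-(g)=\{n\in\mathrm{Dom}(g):g(n)\le n\}$. Its type $\operatorname{typ}(g)$ is: $\alpha$ if $\mathrm{Dom}(g)$ is infinite and $g$ is bounded above; $\beta$ if $\mathrm{Dom}(g)$ is infinite, $\mathrm{Dom}^+(g)$ is finite and $g$ is unbounded above; $\gamma$ if $\mathrm{Dom}^+(g)$ and $\mathrm{Dom}^-(g)$ are both infinite; $\delta$ if $\mathrm{Dom}(g)$ is infinite and $\mathrm{Dom}^-(g)$ is finite; $\epsilon$ if $\mathrm{Dom}(g)$ is finite. The upper type $\operatorname{typ}_u(\mathcal{C},\psi)$ is the $3\times 3$ table with rows and columns indexed by $i,d,a$ (in this order) whose entry in row $b$, column $c$ is $\operatorname{typ}(\mathcal{U}^{bc}_{\mathcal{C}\psi})$. The tables $t_1,\dots,t_7$ are given row by row (rows $i,d,a$; entries in columns $i,d,a$): $t_1$: $i:(\alpha,\alpha,\alpha)$;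 $d:(\alpha,\alpha,\alpha)$; $a:(\alpha,\alpha,\alpha)$. $t_2$: $i:(\gamma,\epsilon,\epsilon)$; $d:(\alpha,\alpha,\alpha)$; $a:(\alpha,\alpha,\alpha)$. $t_3$: $i:(\gamma,\epsilon,\epsilon)$; $d:(\beta,\gamma,\epsilon)$; $a:(\alpha,\alpha,\alpha)$. $t_4$: $i:(\gamma,\epsilon,\epsilon)$; $d:(\gamma,\gamma,\epsilon)$; $a:(\alpha,\alpha,\alpha)$. $t_5$: $i:(\gamma,\epsilon,\epsilon)$; $d:(\gamma,\gamma,\gamma)$; $a:(\gamma,\gamma,\gamma)$. $t_6$: $i:(\gamma,\epsilon,\epsilon)$; $d:(\gamma,\gamma,\delta)$; $a:(\gamma,\gamma,\gamma)$. $t_7$: $i:(\gamma,\epsilon,\epsilon)$; $d:(\gamma,\gamma,\epsilon)$; $a:(\gamma,\gamma,\gamma)$. *)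

theory Defs
  imports Main
begin

text \<open>A decision table: a list of column attributes and a list of rows
(tuple, decision set). The order of rows matters for the column-removal
operation ("only the first row of each group is kept").\<close>

record 'f dtable =
  attrs :: "'f list"
  rows :: "(nat list \<times> nat set) list"

definition tuples :: "'f dtable \<Rightarrow> nat list set" where
  "tuples T = fst ` set (rows T)"

definition valid_table :: "nat \<Rightarrow> 'f dtable \<Rightarrow> bool" where
  "valid_table k T \<longleftrightarrow>
     attrs T \<noteq> [] \<and>
     distinct (map fst (rows T)) \<and>
     (\<forall>(r, D) \<in> set (rows T). length r = length (attrs T) \<and> (\<forall>x \<in> set r. x < k)
         \<and> finite D \<and> D \<noteq> {}) \<and>
     (\<forall>i < length (attrs T). \<forall>j < length (attrs T). attrs T ! i = attrs T ! j \<longrightarrow>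
         (\<forall>(r, D) \<in> set (rows T). r ! i = r ! j))"

definition del_nth :: "nat \<Rightarrow> 'a list \<Rightarrow> 'a list" where
  "del_nth i xs = take i xs @ drop (Suc i) xs"

definition dup_nth :: "nat \<Rightarrow> 'a list \<Rightarrow> 'a list" where
  "dup_nth i xs = take (Suc i) xs @ [xs ! i] @ drop (Suc i) xs"

definition swap_nth :: "nat \<Rightarrow> nat \<Rightarrow> 'a list \<Rightarrow> 'a list" where
  "swap_nth i j xs = xs[i := xs ! j, j := xs ! i]"

definition dedup_rows :: "(nat list \<times> nat set) list \<Rightarrow> (nat list \<times> nat set) list" where
  "dedup_rows xs = map (nth xs)
     (filter (\<lambda>i. \<forall>j < i. fst (xs ! j) \<noteq> fst (xs ! i)) [0..<length xs])"

definition remove_col :: "nat \<Rightarrow> 'f dtable \<Rightarrow> 'f dtable" where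
  "remove_col i T = \<lparr> attrs = del_nth i (attrs T),
     rows = dedup_rows (map (\<lambda>(r, D). (del_nth i r, D)) (rows T)) \<rparr>"

definition swap_col :: "nat \<Rightarrow> nat \<Rightarrow> 'f dtable \<Rightarrow> 'f dtable" where
  "swap_col i j T = \<lparr> attrs = swap_nth i j (attrs T),
     rows = map (\<lambda>(r, D). (swap_nth i j r, D)) (rows T) \<rparr>"

definition dup_col :: "nat \<Rightarrow> 'f dtable \<Rightarrow> 'f dtable" where
  "dup_col i T = \<lparr> attrs = dup_nth i (attrs T),
     rows = map (\<lambda>(r, D). (dup_nth i r, D)) (rows T) \<rparr>"

definition op_step :: "'f dtable \<Rightarrow> 'f dtable \<Rightarrow> bool" where
  "op_step T T' \<longleftrightarrow>
     (\<exists>i < length (attrs T). length (attrs T) \<ge> 2 \<and> T' = remove_col i T) \<or>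
     (\<exists>ds. length ds = length (rows T) \<and> (\<forall>D \<in> set ds. finite D \<and> D \<noteq> {}) \<and>
        T' = \<lparr> attrs = attrs T, rows = zip (map fst (rows T)) ds \<rparr>) \<or>
     (\<exists>i < length (attrs T). \<exists>j < length (attrs T). T' = swap_col i j T) \<or>
     (\<exists>i < length (attrs T). T' = dup_col i T)"

definition closed_class :: "nat \<Rightarrow> 'f dtable set \<Rightarrow> bool" where
  "closed_class k C \<longleftrightarrow> (\<forall>T \<in> C. valid_table k T) \<and>
     (\<forall>T \<in> C. \<forall>T'. op_step T T' \<longrightarrow> T' \<in> C)"

definition subtuples :: "'f dtable \<Rightarrow> ('f \<times> nat) list \<Rightarrow> nat list set" where
  "subtuples T \<alpha> = {r \<in> tuples T. \<forall>(f, \<delta>) \<in> set \<alpha>.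
       \<forall>i < length (attrs T). attrs T ! i = f \<longrightarrow> r ! i = \<delta>}"

text \<open>A decision
tree is the (nonempty) list of subtrees hanging below the unlabelled root.\<close>
datatype 'f dnode = Term nat | Work 'f "(nat \<times> 'f dnode) list"

type_synonym 'f dtree = "'f dnode list"

inductive wf_node :: "nat \<Rightarrow> 'f dnode \<Rightarrow> bool" for k where
  "wf_node k (Term d)"
| "es \<noteq> [] \<Longrightarrow> (\<forall>e. e \<in> set es \<longrightarrow> fst e < k \<and> wf_node k (snd e))
     \<Longrightarrow> wf_node k (Work f es)"

inductive det_node :: "'f dnode \<Rightarrow> bool" where
  "det_node (Term d)"
| "distinct (map fst es) \<Longrightarrow> (\<forall>e. e \<in> set es \<longrightarrow> det_node (snd e))
     \<Longrightarrow> det_node (Work f es)"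

inductive has_attr :: "'f dnode \<Rightarrow> 'f \<Rightarrow> bool" where
  "has_attr (Work f es) f"
| "(\<delta>, t) \<in> set es \<Longrightarrow> has_attr t g \<Longrightarrow> has_attr (Work f es) g"

inductive path :: "'f dnode \<Rightarrow> ('f \<times> nat) list \<Rightarrow> nat \<Rightarrow> bool" where
  "path (Term d) [] d"
| "(\<delta>, t) \<in> set es \<Longrightarrow> path t p d \<Longrightarrow> path (Work f es) ((f, \<delta>) # p) d"

definition cpath :: "'f dtree \<Rightarrow> ('f \<times> nat) list \<Rightarrow> nat \<Rightarrow> bool" where
  "cpath \<Gamma> p d \<longleftrightarrow> (\<exists>t \<in> set \<Gamma>. path t p d)"

definition is_dtree :: "nat \<Rightarrow> 'f dtree \<Rightarrow> bool" where
  "is_dtree k \<Gamma> \<longleftrightarrow> \<Gamma> \<noteq> [] \<and> (\<forall>t \<in> set \<Gamma>. wf_node k t)"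

definition is_deterministic :: "'f dtree \<Rightarrow> bool" where
  "is_deterministic \<Gamma> \<longleftrightarrow> length \<Gamma> = 1 \<and> (\<forall>t \<in> set \<Gamma>. det_node t)"

definition nondet_tree_for :: "nat \<Rightarrow> 'f dtable \<Rightarrow> 'f dtree \<Rightarrow> bool" where
  "nondet_tree_for k T \<Gamma> \<longleftrightarrow> is_dtree k \<Gamma> \<and>
     (\<forall>t \<in> set \<Gamma>. \<forall>f. has_attr t f \<longrightarrow> f \<in> set (attrs T)) \<and>
     \<Union> {subtuples T p | p d. cpath \<Gamma> p d} = tuples T \<and>
     (\<forall>(r, D) \<in> set (rows T). \<forall>p d. cpath \<Gamma> p d \<and> r \<in> subtuples T p \<longrightarrow> d \<in> D)"

definition det_tree_for :: "nat \<Rightarrow> 'f dtable \<Rightarrow> 'f dtree \<Rightarrow> bool" where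
  "det_tree_for k T \<Gamma> \<longleftrightarrow> is_deterministic \<Gamma> \<and> nondet_tree_for k T \<Gamma>"

definition psi_tree :: "('f list \<Rightarrow> nat) \<Rightarrow> 'f dtree \<Rightarrow> nat" where
  "psi_tree \<psi> \<Gamma> = Max {\<psi> (map fst p) | p d. cpath \<Gamma> p d}"

datatype cx = CI | CD | CA

definition psi_of :: "nat \<Rightarrow> ('f list \<Rightarrow> nat) \<Rightarrow> cx \<Rightarrow> 'f dtable \<Rightarrow> nat" where
  "psi_of k \<psi> b T = (case b of
      CI \<Rightarrow> \<psi> (attrs T)
    | CD \<Rightarrow> (LEAST m. \<exists>\<Gamma>. det_tree_for k T \<Gamma> \<and> psi_tree \<psi> \<Gamma> = m)
    | CA \<Rightarrow> (LEAST m. \<exists>\<Gamma>. nondet_tree_for k T \<Gamma> \<and> psi_tree \<psi> \<Gamma> = m))"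

definition U :: "nat \<Rightarrow> 'f dtable set \<Rightarrow> ('f list \<Rightarrow> nat) \<Rightarrow> cx \<Rightarrow> cx \<Rightarrow> nat \<Rightarrow> nat option" where
  "U k C \<psi> b c n = (let S = {psi_of k \<psi> b T | T. T \<in> C \<and> psi_of k \<psi> c T \<le> n} in
     if S \<noteq> {} \<and> finite S then Some (Max S) else None)"

definition pdom :: "(nat \<Rightarrow> nat option) \<Rightarrow> nat set" where
  "pdom g = {n. g n \<noteq> None}"
definition pdom_plus :: "(nat \<Rightarrow> nat option) \<Rightarrow> nat set" where
  "pdom_plus g = {n. \<exists>m. g n = Some m \<and> m \<ge> n}"
definition pdom_minus :: "(nat \<Rightarrow> nat option) \<Rightarrow> nat set" where
  "pdom_minus g = {n. \<exists>m. g n = Some m \<and> m \<le> n}"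
definition bdd_above_p :: "(nat \<Rightarrow> nat option) \<Rightarrow> bool" where
  "bdd_above_p g \<longleftrightarrow> (\<exists>B. \<forall>n m. g n = Some m \<longrightarrow> m \<le> B)"

datatype ftype = T\<alpha> | T\<beta> | T\<gamma> | T\<delta> | T\<epsilon>

definition has_typ :: "(nat \<Rightarrow> nat option) \<Rightarrow> ftype \<Rightarrow> bool" where
  "has_typ g t = (case t of
      T\<alpha> \<Rightarrow> infinite (pdom g) \<and> bdd_above_p g
    | T\<beta> \<Rightarrow> infinite (pdom g) \<and> finite (pdom_plus g) \<and> \<not> bdd_above_p g
    | T\<gamma> \<Rightarrow> infinite (pdom_plus g) \<and> infinite (pdom_minus g)
    | T\<delta> \<Rightarrow> infinite (pdom g) \<and> finite (pdom_minus g)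
    | T\<epsilon> \<Rightarrow> finite (pdom g))"

section \<open>The tables t_1, ..., t_7 (rows i,d,a; columns i,d,a)\<close>

definition row3 :: "ftype \<Rightarrow> ftype \<Rightarrow> ftype \<Rightarrow> cx \<Rightarrow> ftype" where
  "row3 x y z c = (case c of CI \<Rightarrow> x | CD \<Rightarrow> y | CA \<Rightarrow> z)"

definition ttab :: "nat \<Rightarrow> cx \<Rightarrow> cx \<Rightarrow> ftype" where
  "ttab j b = (case b of
      CI \<Rightarrow> (if j = 1 then row3 T\<alpha> T\<alpha> T\<alpha> else row3 T\<gamma> T\<epsilon> T\<epsilon>)
    | CD \<Rightarrow> (if j = 1 \<or> j = 2 then row3 T\<alpha> T\<alpha> T\<alpha>
             else if j = 3 then row3 T\<beta> T\<gamma> T\<epsilon>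
             else if j = 4 then row3 T\<gamma> T\<gamma> T\<epsilon>
             else if j = 5 then row3 T\<gamma> T\<gamma> T\<gamma>
             else if j = 6 then row3 T\<gamma> T\<gamma> T\<delta>
             else row3 T\<gamma> T\<gamma> T\<epsilon>)
    | CA \<Rightarrow> (if j \<le> 4 then row3 T\<alpha> T\<alpha> T\<alpha> else row3 T\<gamma> T\<gamma> T\<gamma>))"

end

theory Submission
  imports Defs "HOL-Library.Infinite_Set"
begin

text \<open>All seven tables are realised with k = 3 by a single closed class and suitable complexity
  measures. In a table of the class the attributes lie in a triple {3p, 3p + 1, 3p + 2}, and the
  entry of every row in a column labelled f is entry f mod 3 of one of six fixed patterns; the four
  operations only select columns and restrict rows, so they preserve this. A word inside a triple
  is charged F p l, where its level l is 4 if it queries the whole triple, 3 if it queries the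
  partner (3p to 3p + 2 to 3p + 1 to 3p) of its first attribute, and otherwise the number of
  attributes queried.

  The patterns are chosen so that, for a table with a full triple, an adaptive deterministic tree
  gets by with words of level 2 or 3 and every row has a certificate of level at most 2, whereas
  in the table of all six patterns each attribute has two rows told apart only by its partner, so
  every deterministic tree has a path of level at least 3. Thus the costs of all tables are
  controlled by F p 1, ..., F p 4, and the empty table, a two-row table and the full pattern table
  attain the relevant bounds; a choice of F for each j produces the types of t_j.\<close>

text \<open>By validity, equally labelled columns agree, so the choice of the column is irrelevant.\<close>
definition attr_value :: "'f dtable \<Rightarrow> nat list \<Rightarrow> 'f \<Rightarrow> nat" where
  "attr_value T r f = r ! (SOME i. i < length (attrs T) \<and> attrs T ! i = f)"

lemma tuplesI: "(r, D) \<in> set (rows T) \<Longrightarrow> r \<in> tuples T"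
  unfolding tuples_def by force

lemma tuplesE:
  assumes "r \<in> tuples T"
  obtains D where "(r, D) \<in> set (rows T)"
  using assms unfolding tuples_def by force

lemma length_tuple: "valid_table k T \<Longrightarrow> r \<in> tuples T \<Longrightarrow> length r = length (attrs T)"
  unfolding valid_table_def by (auto elim: tuplesE)

lemma nth_tuple_eq_attr_value:
  assumes valid: "valid_table k T" and r: "r \<in> tuples T" and i: "i < length (attrs T)"
  shows "r ! i = attr_value T r (attrs T ! i)"
proof -
  let ?j = "SOME j. j < length (attrs T) \<and> attrs T ! j = attrs T ! i"
  have j: "?j < length (attrs T) \<and> attrs T ! ?j = attrs T ! i"
    using someI[of "\<lambda>j. j < length (attrs T) \<and> attrs T ! j = attrs T ! i" i] i by blast
  obtain D where "(r, D) \<in> set (rows T)" using r by (rule tuplesE)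
  then have "r ! i = r ! ?j" using valid i j unfolding valid_table_def by fastforce
  then show ?thesis unfolding attr_value_def .
qed

lemma valid_table_if_distinct_attrs:
  assumes "attrs T \<noteq> []" "distinct (attrs T)" "distinct (map fst (rows T))"
    and "\<forall>(r, D) \<in> set (rows T).
      length r = length (attrs T) \<and> (\<forall>x \<in> set r. x < k) \<and> finite D \<and> D \<noteq> {}"
  shows "valid_table k T"
  using assms unfolding valid_table_def by (auto simp: nth_eq_iff_index_eq)

lemma attr_value_less:
  assumes valid: "valid_table k T" and r: "r \<in> tuples T" and f: "f \<in> set (attrs T)"
  shows "attr_value T r f < k"
proof -
  obtain i where i: "i < length (attrs T)" "f = attrs T ! i" using f by (auto simp: in_set_conv_nth)
  obtain D where "(r, D) \<in> set (rows T)" using r by (rule tuplesE)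
  then have "\<forall>x \<in> set r. x < k" using valid unfolding valid_table_def by blast
  moreover have "r ! i \<in> set r" using i length_tuple[OF valid r] by simp
  ultimately show ?thesis using nth_tuple_eq_attr_value[OF valid r i(1)] i(2) by simp
qed

lemma tuples_eqI:
  assumes valid: "valid_table k T" and r: "r \<in> tuples T" and r': "r' \<in> tuples T"
    and eq: "\<And>f. f \<in> set (attrs T) \<Longrightarrow> attr_value T r f = attr_value T r' f"
  shows "r = r'"
proof (rule nth_equalityI)
  show "length r = length r'" using length_tuple[OF valid r] length_tuple[OF valid r'] by simp
  fix i assume "i < length r"
  then have i: "i < length (attrs T)" using length_tuple[OF valid r] by simp
  show "r ! i = r' ! i"
    using nth_tuple_eq_attr_value[OF valid r i] nth_tuple_eq_attr_value[OF valid r' i] eq i by simp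
qed

lemma subtuples_subset: "subtuples T p \<subseteq> tuples T"
  unfolding subtuples_def by auto

lemma subtuples_Nil [simp]: "subtuples T [] = tuples T"
  unfolding subtuples_def by simp

lemma subtuples_iff:
  assumes valid: "valid_table k T"
  shows "r \<in> subtuples T p \<longleftrightarrow>
    r \<in> tuples T \<and> (\<forall>(f, \<delta>) \<in> set p. f \<in> set (attrs T) \<longrightarrow> attr_value T r f = \<delta>)"
proof -
  have "(\<forall>i < length (attrs T). attrs T ! i = f \<longrightarrow> r ! i = \<delta>) \<longleftrightarrow>
      (f \<in> set (attrs T) \<longrightarrow> attr_value T r f = \<delta>)" if "r \<in> tuples T" for f \<delta>
    using nth_tuple_eq_attr_value[OF valid that] by (auto simp: in_set_conv_nth)
  then show ?thesis unfolding subtuples_def by (cases "r \<in> tuples T") simp_all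
qed

lemma attr_value_if_mem_subtuples:
  assumes valid: "valid_table k T" and "r \<in> subtuples T p" "(f, \<delta>) \<in> set p" "f \<in> set (attrs T)"
  shows "attr_value T r f = \<delta>"
proof -
  have "\<forall>(f, \<delta>) \<in> set p. f \<in> set (attrs T) \<longrightarrow> attr_value T r f = \<delta>"
    using assms(2) unfolding subtuples_iff[OF valid] by (rule conjunct2)
  from bspec[OF this assms(3)] show ?thesis using assms(4) by simp
qed

lemma mem_subtuplesI:
  assumes valid: "valid_table k T" and "r \<in> tuples T"
    and "\<And>f \<delta>. (f, \<delta>) \<in> set p \<Longrightarrow> f \<in> set (attrs T) \<Longrightarrow> attr_value T r f = \<delta>"
  shows "r \<in> subtuples T p"
  unfolding subtuples_iff[OF valid]
proof (intro conjI ballI)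
  fix x assume x: "x \<in> set p"
  obtain f \<delta> where "x = (f, \<delta>)" by (cases x)
  then show "case x of (f, \<delta>) \<Rightarrow> f \<in> set (attrs T) \<longrightarrow> attr_value T r f = \<delta>"
    using assms(3) x by simp
qed (fact assms(2))

section \<open>Closed classes\<close>

definition selects_columns :: "'f dtable \<Rightarrow> nat list \<Rightarrow> 'f dtable \<Rightarrow> bool" where
  "selects_columns T ids T' \<longleftrightarrow> ids \<noteq> [] \<and> set ids \<subseteq> {..<length (attrs T)} \<and>
     attrs T' = map ((!) (attrs T)) ids \<and> distinct (map fst (rows T')) \<and>
     (\<forall>(r', D') \<in> set (rows T'). finite D' \<and> D' \<noteq> {} \<and> (\<exists>r \<in> tuples T. r' = map ((!) r) ids))"

lemma valid_table_selects_columns: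
  assumes valid: "valid_table k T" and sel: "selects_columns T ids T'"
  shows "valid_table k T'"
proof -
  have ids: "ids \<noteq> []" "\<And>i. i \<in> set ids \<Longrightarrow> i < length (attrs T)"
    and attrs': "attrs T' = map ((!) (attrs T)) ids"
    and distinct': "distinct (map fst (rows T'))"
    and rows': "\<And>r' D'. (r', D') \<in> set (rows T') \<Longrightarrow>
       finite D' \<and> D' \<noteq> {} \<and> (\<exists>r \<in> tuples T. r' = map ((!) r) ids)"
    using sel unfolding selects_columns_def by auto
  have row_ok: "length r' = length (attrs T') \<and> (\<forall>x \<in> set r'. x < k) \<and> finite D' \<and> D' \<noteq> {}"
    if row: "(r', D') \<in> set (rows T')" for r' D'
  proof -
    obtain r where r: "r \<in> tuples T" "r' = map ((!) r) ids" using rows'[OF row] by blast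
    obtain D where rD: "(r, D) \<in> set (rows T)" using r(1) by (rule tuplesE)
    have entries: "\<forall>x \<in> set r. x < k" using valid rD unfolding valid_table_def by blast
    have "r ! i < k" if "i \<in> set ids" for i
      using entries ids(2)[OF that] length_tuple[OF valid r(1)] by simp
    then show ?thesis using rows'[OF row] r(2) attrs' by auto
  qed
  have equal_columns: "r' ! i = r' ! j"
    if row: "(r', D') \<in> set (rows T')" and ij: "i < length ids" "j < length ids"
      and same: "attrs T ! (ids ! i) = attrs T ! (ids ! j)"
    for r' D' i j
  proof -
    obtain r where r: "r \<in> tuples T" "r' = map ((!) r) ids" using rows'[OF row] by blast
    obtain D where "(r, D) \<in> set (rows T)" using r(1) by (rule tuplesE)
    then have "r ! (ids ! i) = r ! (ids ! j)"
      using valid same ids(2)[OF nth_mem[OF ij(1)]] ids(2)[OF nth_mem[OF ij(2)]]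
      unfolding valid_table_def by blast
    then show ?thesis using r(2) ij by simp
  qed
  show ?thesis
    unfolding valid_table_def
  proof (intro conjI)
    show "attrs T' \<noteq> []" using ids(1) attrs' by simp
    show "\<forall>(r', D') \<in> set (rows T'). length r' = length (attrs T') \<and> (\<forall>x \<in> set r'. x < k) \<and>
        finite D' \<and> D' \<noteq> {}"
      using row_ok by blast
    show "\<forall>i < length (attrs T'). \<forall>j < length (attrs T'). attrs T' ! i = attrs T' ! j \<longrightarrow>
        (\<forall>(r', D') \<in> set (rows T'). r' ! i = r' ! j)"
      using equal_columns unfolding attrs' by auto
  qed (fact distinct')
qed

lemma map_nth_eq_imp_eq:
  assumes "length r = n" "length r' = n" "{..<n} \<subseteq> set ids" "map ((!) r) ids = map ((!) r') ids"
  shows "r = r'"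
proof (rule nth_equalityI)
  fix i assume "i < length r"
  then have "i \<in> set ids" using assms(1,3) by auto
  then obtain j where "j < length ids" "ids ! j = i" by (auto simp: in_set_conv_nth)
  then show "r ! i = r' ! i" using arg_cong[OF assms(4), of "\<lambda>xs. xs ! j"] by simp
qed (use assms in simp)

text \<open>Duplicating, permuting and changing decisions keep every column, so the rows stay distinct.\<close>
lemma selects_all_columns:
  assumes valid: "valid_table k T" and ids: "set ids = {..<length (attrs T)}"
    and attrs': "attrs T' = map ((!) (attrs T)) ids"
    and tuples': "map fst (rows T') = map (\<lambda>r. map ((!) r) ids) (map fst (rows T))"
    and decisions': "\<forall>D \<in> snd ` set (rows T'). finite D \<and> D \<noteq> {}"
  shows "selects_columns T ids T'"
  unfolding selects_columns_def
proof (intro conjI)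
  show "ids \<noteq> []" using valid ids unfolding valid_table_def by auto
  have "inj_on (\<lambda>r. map ((!) r) ids) (set (map fst (rows T)))"
  proof (rule inj_onI)
    fix r r' assume rr': "r \<in> set (map fst (rows T))" "r' \<in> set (map fst (rows T))"
      and eq: "map ((!) r) ids = map ((!) r') ids"
    have "length r = length (attrs T)" "length r' = length (attrs T)"
      using rr' length_tuple[OF valid] unfolding tuples_def by auto
    then show "r = r'" using map_nth_eq_imp_eq[OF _ _ _ eq] ids by blast
  qed
  moreover have "distinct (map fst (rows T))" using valid unfolding valid_table_def by blast
  ultimately show "distinct (map fst (rows T'))" unfolding tuples' by (simp only: distinct_map)
  show "\<forall>(r', D') \<in> set (rows T'). finite D' \<and> D' \<noteq> {} \<and> (\<exists>r \<in> tuples T. r' = map ((!) r) ids)"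
  proof clarify
    fix r' D' assume row: "(r', D') \<in> set (rows T')"
    then have "r' \<in> set (map fst (rows T'))" by force
    then have "\<exists>r \<in> tuples T. r' = map ((!) r) ids" unfolding tuples' tuples_def by auto
    then show "finite D' \<and> D' \<noteq> {} \<and> (\<exists>r \<in> tuples T. r' = map ((!) r) ids)"
      using decisions' row by force
  qed
qed (use ids attrs' in auto)

lemma del_nth_map: "del_nth i (map g xs) = map g (del_nth i xs)"
  unfolding del_nth_def by (simp add: take_map drop_map)

lemma dup_nth_map: "i < length xs \<Longrightarrow> dup_nth i (map g xs) = map g (dup_nth i xs)"
  unfolding dup_nth_def by (simp add: take_map drop_map)

lemma swap_nth_map:
  "i < length xs \<Longrightarrow> j < length xs \<Longrightarrow> swap_nth i j (map g xs) = map g (swap_nth i j xs)"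
  unfolding swap_nth_def by (simp add: map_update)

lemma del_nth_conv_map_nth: "del_nth i xs = map ((!) xs) (del_nth i [0..<length xs])"
  by (metis del_nth_map map_nth)

lemma dup_nth_conv_map_nth: "i < length xs \<Longrightarrow> dup_nth i xs = map ((!) xs) (dup_nth i [0..<length xs])"
  by (metis dup_nth_map length_upt map_nth minus_nat.diff_0)

lemma swap_nth_conv_map_nth:
  "i < length xs \<Longrightarrow> j < length xs \<Longrightarrow> swap_nth i j xs = map ((!) xs) (swap_nth i j [0..<length xs])"
  by (metis swap_nth_map length_upt map_nth minus_nat.diff_0)

lemma set_swap_nth: "i < length xs \<Longrightarrow> j < length xs \<Longrightarrow> set (swap_nth i j xs) = set xs"
  by (simp add: swap_nth_def)

lemma set_dup_nth: "i < length xs \<Longrightarrow> set (dup_nth i xs) = set xs"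
proof -
  assume "i < length xs"
  then have "xs ! i \<in> set (take (Suc i) xs)" by (simp add: take_Suc_conv_app_nth)
  moreover have "set (take (Suc i) xs) \<union> set (drop (Suc i) xs) = set xs"
    by (metis append_take_drop_id set_append)
  ultimately show ?thesis unfolding dup_nth_def by auto
qed

lemma set_del_nth: "set (del_nth i xs) \<subseteq> set xs"
  unfolding del_nth_def using set_take_subset set_drop_subset by (metis Un_least set_append)

lemma length_del_nth: "i < length xs \<Longrightarrow> length (del_nth i xs) = length xs - 1"
  unfolding del_nth_def by simp

lemma set_dedup_rows: "set (dedup_rows xs) \<subseteq> set xs"
  unfolding dedup_rows_def by auto

lemma distinct_dedup_rows: "distinct (map fst (dedup_rows xs))"
proof -
  let ?first = "filter (\<lambda>i. \<forall>j < i. fst (xs ! j) \<noteq> fst (xs ! i)) [0..<length xs]"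
  have "inj_on (\<lambda>i. fst (xs ! i)) (set ?first)"
  proof (rule inj_onI)
    fix a b assume "a \<in> set ?first" "b \<in> set ?first" "fst (xs ! a) = fst (xs ! b)"
    then show "a = b" by (cases a b rule: linorder_cases) auto
  qed
  then show ?thesis unfolding dedup_rows_def by (simp add: distinct_map comp_def)
qed

lemma selects_columns_remove_col:
  assumes valid: "valid_table k T" and i: "i < length (attrs T)" "2 \<le> length (attrs T)"
  shows "selects_columns T (del_nth i [0..<length (attrs T)]) (remove_col i T)"
  unfolding selects_columns_def
proof (intro conjI)
  let ?ids = "del_nth i [0..<length (attrs T)]"
  show "?ids \<noteq> []" using i length_del_nth[of i "[0..<length (attrs T)]"] by auto
  show "set ?ids \<subseteq> {..<length (attrs T)}" using set_del_nth[of i "[0..<length (attrs T)]"] by auto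
  show "attrs (remove_col i T) = map ((!) (attrs T)) ?ids"
    unfolding remove_col_def by (simp flip: del_nth_conv_map_nth)
  show "distinct (map fst (rows (remove_col i T)))"
    unfolding remove_col_def by (simp add: distinct_dedup_rows)
  show "\<forall>(r', D') \<in> set (rows (remove_col i T)).
      finite D' \<and> D' \<noteq> {} \<and> (\<exists>r \<in> tuples T. r' = map ((!) r) ?ids)"
  proof clarify
    fix r' D' assume "(r', D') \<in> set (rows (remove_col i T))"
    then obtain r where r: "(r, D') \<in> set (rows T)" "r' = del_nth i r"
      using set_dedup_rows unfolding remove_col_def by fastforce
    then have "r' = map ((!) r) ?ids"
      using del_nth_conv_map_nth[of i r] length_tuple[OF valid tuplesI] by metis
    moreover have "finite D' \<and> D' \<noteq> {}" using r(1) valid unfolding valid_table_def by blast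
    ultimately show "finite D' \<and> D' \<noteq> {} \<and> (\<exists>r \<in> tuples T. r' = map ((!) r) ?ids)"
      using tuplesI[OF r(1)] by blast
  qed
qed

lemma selects_columns_change_decisions:
  assumes valid: "valid_table k T"
    and ds: "length ds = length (rows T)" "\<forall>D \<in> set ds. finite D \<and> D \<noteq> {}"
  shows "selects_columns T [0..<length (attrs T)] \<lparr>attrs = attrs T, rows = zip (map fst (rows T)) ds\<rparr>"
    (is "selects_columns T ?ids ?T'")
proof (rule selects_all_columns[OF valid])
  show "set ?ids = {..<length (attrs T)}" by auto
  show "attrs ?T' = map ((!) (attrs T)) ?ids" by (simp add: map_nth)
  have "map (\<lambda>r. map ((!) r) ?ids) (map fst (rows T)) = map fst (rows T)"
    using length_tuple[OF valid] by (intro map_idI) (metis map_nth set_map tuples_def)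
  then show "map fst (rows ?T') = map (\<lambda>r. map ((!) r) ?ids) (map fst (rows T))"
    using ds(1) by simp
  show "\<forall>D \<in> snd ` set (rows ?T'). finite D \<and> D \<noteq> {}"
  proof
    fix D assume "D \<in> snd ` set (rows ?T')"
    then have "D \<in> set ds" by (force dest: set_zip_rightD)
    then show "finite D \<and> D \<noteq> {}" using ds(2) by blast
  qed
qed

lemma selects_columns_swap_col:
  assumes valid: "valid_table k T" and ij: "i < length (attrs T)" "j < length (attrs T)"
  shows "selects_columns T (swap_nth i j [0..<length (attrs T)]) (swap_col i j T)"
    (is "selects_columns T ?ids ?T'")
proof (rule selects_all_columns[OF valid])
  show "set ?ids = {..<length (attrs T)}" using ij by (simp add: set_swap_nth lessThan_atLeast0)
  show "attrs ?T' = map ((!) (attrs T)) ?ids"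
    using swap_nth_conv_map_nth[OF ij] by (simp add: swap_col_def)
  have "map fst (rows ?T') = map (swap_nth i j) (map fst (rows T))"
    by (simp add: swap_col_def case_prod_beta)
  also have "\<dots> = map (\<lambda>r. map ((!) r) ?ids) (map fst (rows T))"
  proof (rule map_cong[OF refl])
    fix r assume "r \<in> set (map fst (rows T))"
    then have "length r = length (attrs T)" using length_tuple[OF valid] by (simp add: tuples_def)
    then show "swap_nth i j r = map ((!) r) ?ids" using swap_nth_conv_map_nth[of i r j] ij by simp
  qed
  finally show "map fst (rows ?T') = map (\<lambda>r. map ((!) r) ?ids) (map fst (rows T))" .
  have "snd ` set (rows ?T') = snd ` set (rows T)" by (force simp: swap_col_def)
  then show "\<forall>D \<in> snd ` set (rows ?T'). finite D \<and> D \<noteq> {}"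
    using valid unfolding valid_table_def by auto
qed

lemma selects_columns_dup_col:
  assumes valid: "valid_table k T" and i: "i < length (attrs T)"
  shows "selects_columns T (dup_nth i [0..<length (attrs T)]) (dup_col i T)"
    (is "selects_columns T ?ids ?T'")
proof (rule selects_all_columns[OF valid])
  show "set ?ids = {..<length (attrs T)}" using i by (simp add: set_dup_nth lessThan_atLeast0)
  show "attrs ?T' = map ((!) (attrs T)) ?ids"
    using dup_nth_conv_map_nth[OF i] by (simp add: dup_col_def)
  have "map fst (rows ?T') = map (dup_nth i) (map fst (rows T))"
    by (simp add: dup_col_def case_prod_beta)
  also have "\<dots> = map (\<lambda>r. map ((!) r) ?ids) (map fst (rows T))"
  proof (rule map_cong[OF refl])
    fix r assume "r \<in> set (map fst (rows T))"
    then have "length r = length (attrs T)" using length_tuple[OF valid] by (simp add: tuples_def)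
    then show "dup_nth i r = map ((!) r) ?ids" using dup_nth_conv_map_nth[of i r] i by simp
  qed
  finally show "map fst (rows ?T') = map (\<lambda>r. map ((!) r) ?ids) (map fst (rows T))" .
  have "snd ` set (rows ?T') = snd ` set (rows T)" by (force simp: dup_col_def)
  then show "\<forall>D \<in> snd ` set (rows ?T'). finite D \<and> D \<noteq> {}"
    using valid unfolding valid_table_def by auto
qed

lemma op_step_selects_columns:
  assumes valid: "valid_table k T" and step: "op_step T T'"
  obtains ids where "selects_columns T ids T'"
  using step unfolding op_step_def
proof (elim disjE exE conjE)
  fix i assume "i < length (attrs T)" "2 \<le> length (attrs T)" "T' = remove_col i T"
  then show thesis using that selects_columns_remove_col[OF valid] by blast
next
  fix ds assume "length ds = length (rows T)" "\<forall>D \<in> set ds. finite D \<and> D \<noteq> {}"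
    "T' = \<lparr>attrs = attrs T, rows = zip (map fst (rows T)) ds\<rparr>"
  then show thesis using that selects_columns_change_decisions[OF valid] by blast
next
  fix i j assume "i < length (attrs T)" "j < length (attrs T)" "T' = swap_col i j T"
  then show thesis using that selects_columns_swap_col[OF valid] by blast
next
  fix i assume "i < length (attrs T)" "T' = dup_col i T"
  then show thesis using that selects_columns_dup_col[OF valid] by blast
qed

lemma closed_classI:
  assumes valid: "\<forall>T \<in> C. valid_table k T"
    and selection: "\<And>T ids T'. T \<in> C \<Longrightarrow> selects_columns T ids T' \<Longrightarrow> T' \<in> C"
  shows "closed_class k C"
  unfolding closed_class_def using valid selection op_step_selects_columns by metis

inductive_simps path_Term_iff [simp]: "path (Term d) p d'"
inductive_simps path_Work_iff: "path (Work f es) p d"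
inductive_simps wf_node_Work_iff: "wf_node k (Work f es)"
inductive_simps has_attr_Term_iff [simp]: "has_attr (Term d) g"
inductive_simps has_attr_Work_iff: "has_attr (Work f es) g"
inductive_simps det_node_Work_iff: "det_node (Work f es)"

lemma finite_paths: "finite {(p, d). path t p d}"
proof (induction t)
  case (Term d)
  then show ?case by simp
next
  case (Work f es)
  have "{(p, d). path (Work f es) p d} =
      (\<Union>(\<delta>, t) \<in> set es. (\<lambda>(p, d). ((f, \<delta>) # p, d)) ` {(p, d). path t p d})"
    by (auto simp: path_Work_iff)
  then show ?case using Work.IH by (force simp: snds.simps)
qed

lemma finite_cpaths: "finite {(p, d). cpath \<Gamma> p d}"
proof -
  have "{(p, d). cpath \<Gamma> p d} = (\<Union>t \<in> set \<Gamma>. {(p, d). path t p d})"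
    unfolding cpath_def by auto
  then show ?thesis by (simp add: finite_paths)
qed

lemma wf_node_has_path: "wf_node k t \<Longrightarrow> \<exists>p d. path t p d"
proof (induction rule: wf_node.induct)
  case (2 es f)
  then obtain \<delta> t where "(\<delta>, t) \<in> set es" by (cases es) auto
  with 2 obtain p d where "path t p d" by fastforce
  with \<open>(\<delta>, t) \<in> set es\<close> show ?case by (auto simp: path_Work_iff)
qed simp

lemma has_attr_if_path: "path t p d \<Longrightarrow> (f, \<delta>) \<in> set p \<Longrightarrow> has_attr t f"
  by (induction rule: path.induct) (auto intro: has_attr.intros)

lemma psi_tree_eq_Max: "psi_tree \<psi> \<Gamma> = Max ((\<lambda>(p, d). \<psi> (map fst p)) ` {(p, d). cpath \<Gamma> p d})"
  unfolding psi_tree_def by (rule arg_cong[where f = Max]) auto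

lemma psi_tree_ge: "cpath \<Gamma> p d \<Longrightarrow> \<psi> (map fst p) \<le> psi_tree \<psi> \<Gamma>"
  unfolding psi_tree_eq_Max by (rule Max_ge) (auto intro: finite_cpaths)

lemma psi_tree_le:
  assumes "is_dtree k \<Gamma>" and "\<And>p d. cpath \<Gamma> p d \<Longrightarrow> \<psi> (map fst p) \<le> m"
  shows "psi_tree \<psi> \<Gamma> \<le> m"
proof -
  obtain t where "t \<in> set \<Gamma>" "wf_node k t" using assms(1) unfolding is_dtree_def by (cases \<Gamma>) auto
  then obtain p d where "cpath \<Gamma> p d" using wf_node_has_path unfolding cpath_def by blast
  then show ?thesis
    unfolding psi_tree_eq_Max using assms(2) by (intro Max.boundedI) (auto intro: finite_cpaths)
qed

section \<open>Decision trees for a table\<close>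

definition identifies_row :: "'f dtable \<Rightarrow> ('f \<times> nat) list \<Rightarrow> bool" where
  "identifies_row T p \<longleftrightarrow> (\<forall>r \<in> subtuples T p. \<forall>r' \<in> subtuples T p. r = r')"

definition decision_for :: "'f dtable \<Rightarrow> ('f \<times> nat) list \<Rightarrow> nat" where
  "decision_for T p = (SOME d. \<forall>(r, D) \<in> set (rows T). r \<in> subtuples T p \<longrightarrow> d \<in> D)"

lemma decision_for_mem:
  assumes valid: "valid_table k T" and identifies: "identifies_row T p"
    and row: "(r, D) \<in> set (rows T)" and r: "r \<in> subtuples T p"
  shows "decision_for T p \<in> D"
proof -
  have distinct: "distinct (map fst (rows T))" and "D \<noteq> {}"
    using valid row unfolding valid_table_def by auto
  then obtain d where d: "d \<in> D" by blast
  have "d \<in> D'" if row': "(r', D') \<in> set (rows T)" and r': "r' \<in> subtuples T p" for r' D'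
  proof -
    have "r' = r" using identifies r' r unfolding identifies_row_def by blast
    then have "D' = D" using row' row distinct by (metis eq_key_imp_eq_value)
    then show ?thesis using d by simp
  qed
  then have "\<forall>(r', D') \<in> set (rows T). r' \<in> subtuples T p \<longrightarrow> d \<in> D'" by blast
  then have "\<forall>(r', D') \<in> set (rows T). r' \<in> subtuples T p \<longrightarrow> decision_for T p \<in> D'"
    unfolding decision_for_def by (rule someI)
  then show ?thesis using row r by blast
qed

lemma nondet_tree_forI:
  assumes valid: "valid_table k T" and tree: "is_dtree k \<Gamma>"
    and attrs: "\<And>t f. t \<in> set \<Gamma> \<Longrightarrow> has_attr t f \<Longrightarrow> f \<in> set (attrs T)"
    and covers: "\<And>r. r \<in> tuples T \<Longrightarrow> \<exists>p d. cpath \<Gamma> p d \<and> r \<in> subtuples T p"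
    and paths: "\<And>p d. cpath \<Gamma> p d \<Longrightarrow> identifies_row T p \<and> d = decision_for T p"
  shows "nondet_tree_for k T \<Gamma>"
  unfolding nondet_tree_for_def
proof (intro conjI)
  show "\<Union> {subtuples T p | p d. cpath \<Gamma> p d} = tuples T"
  proof
    show "\<Union> {subtuples T p | p d. cpath \<Gamma> p d} \<subseteq> tuples T" using subtuples_subset by blast
    show "tuples T \<subseteq> \<Union> {subtuples T p | p d. cpath \<Gamma> p d}"
    proof
      fix r assume "r \<in> tuples T"
      then obtain p d where "cpath \<Gamma> p d" "r \<in> subtuples T p" using covers by blast
      then show "r \<in> \<Union> {subtuples T p | p d. cpath \<Gamma> p d}" by blast
    qed
  qed
  show "\<forall>(r, D) \<in> set (rows T). \<forall>p d. cpath \<Gamma> p d \<and> r \<in> subtuples T p \<longrightarrow> d \<in> D"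
  proof clarify
    fix r D p d assume "(r, D) \<in> set (rows T)" "cpath \<Gamma> p d" "r \<in> subtuples T p"
    then show "d \<in> D" using paths decision_for_mem[OF valid] by metis
  qed
qed (use tree attrs in auto)

lemma nondet_tree_for_covers:
  assumes "nondet_tree_for k T \<Gamma>" and "r \<in> tuples T"
  obtains p d where "cpath \<Gamma> p d" "r \<in> subtuples T p"
  using assms unfolding nondet_tree_for_def by blast

lemma nondet_tree_for_decision:
  assumes "nondet_tree_for k T \<Gamma>" and "(r, D) \<in> set (rows T)" "cpath \<Gamma> p d" "r \<in> subtuples T p"
  shows "d \<in> D"
  using assms unfolding nondet_tree_for_def by blast

lemma nondet_tree_for_path_attrs:
  assumes "nondet_tree_for k T \<Gamma>" and "cpath \<Gamma> p d"
  shows "set (map fst p) \<subseteq> set (attrs T)"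
  using assms has_attr_if_path unfolding nondet_tree_for_def cpath_def by fastforce

fun query_tree :: "nat \<Rightarrow> 'f list \<Rightarrow> (('f \<times> nat) list \<Rightarrow> nat) \<Rightarrow> 'f dnode" where
  "query_tree k [] L = Term (L [])"
| "query_tree k (f # fs) L = Work f (map (\<lambda>v. (v, query_tree k fs (\<lambda>p. L ((f, v) # p)))) [0..<k])"

lemma path_query_tree_iff:
  "path (query_tree k fs L) p d \<longleftrightarrow> map fst p = fs \<and> (\<forall>x \<in> set p. snd x < k) \<and> d = L p"
proof (induction fs arbitrary: L p)
  case (Cons f fs)
  show ?case
  proof
    assume "path (query_tree k (f # fs) L) p d"
    then obtain v p' where "v < k" "p = (f, v) # p'" "path (query_tree k fs (\<lambda>p. L ((f, v) # p))) p' d"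
      by (auto simp: path_Work_iff)
    then show "map fst p = f # fs \<and> (\<forall>x \<in> set p. snd x < k) \<and> d = L p" using Cons.IH by auto
  next
    assume p: "map fst p = f # fs \<and> (\<forall>x \<in> set p. snd x < k) \<and> d = L p"
    then obtain v p' where p': "p = (f, v) # p'" by (cases p) auto
    then have "path (query_tree k fs (\<lambda>p. L ((f, v) # p))) p' d" "v < k" using Cons.IH p by auto
    then show "path (query_tree k (f # fs) L) p d" using p' by (force simp: path_Work_iff)
  qed
qed auto

lemma wf_node_query_tree: "0 < k \<Longrightarrow> wf_node k (query_tree k fs L)"
  by (induction fs arbitrary: L) (auto simp: wf_node_Work_iff intro: wf_node.intros)

lemma det_node_query_tree: "det_node (query_tree k fs L)"
  by (induction fs arbitrary: L) (auto simp: det_node_Work_iff comp_def intro: det_node.intros)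

lemma has_attr_query_tree: "has_attr (query_tree k fs L) f \<Longrightarrow> f \<in> set fs"
  by (induction fs arbitrary: L) (auto simp: has_attr_Work_iff)

fun word_tree :: "('f \<times> nat) list \<Rightarrow> nat \<Rightarrow> 'f dnode" where
  "word_tree [] d = Term d"
| "word_tree ((f, \<delta>) # p) d = Work f [(\<delta>, word_tree p d)]"

lemma path_word_tree_iff: "path (word_tree p d) p' d' \<longleftrightarrow> p' = p \<and> d' = d"
  by (induction p d arbitrary: p' rule: word_tree.induct) (auto simp: path_Work_iff)

lemma wf_node_word_tree: "\<forall>x \<in> set p. snd x < k \<Longrightarrow> wf_node k (word_tree p d)"
  by (induction p d rule: word_tree.induct) (auto simp: wf_node_Work_iff intro: wf_node.intros)

lemma has_attr_word_tree: "has_attr (word_tree p d) f \<Longrightarrow> f \<in> fst ` set p"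
  by (induction p d rule: word_tree.induct) (auto simp: has_attr_Work_iff)

lemma psi_of_CI [simp]: "psi_of k \<psi> CI T = \<psi> (attrs T)"
  unfolding psi_of_def by simp

lemma psi_of_CD_le: "det_tree_for k T \<Gamma> \<Longrightarrow> psi_of k \<psi> CD T \<le> psi_tree \<psi> \<Gamma>"
  unfolding psi_of_def by (auto intro: Least_le)

lemma psi_of_CA_le: "nondet_tree_for k T \<Gamma> \<Longrightarrow> psi_of k \<psi> CA T \<le> psi_tree \<psi> \<Gamma>"
  unfolding psi_of_def by (auto intro: Least_le)

lemma identifies_row_if_queries_all_attrs:
  assumes valid: "valid_table k T" and all: "set (attrs T) \<subseteq> set (map fst p)"
  shows "identifies_row T p"
  unfolding identifies_row_def
proof (intro ballI)
  fix r r' assume r: "r \<in> subtuples T p" and r': "r' \<in> subtuples T p"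
  show "r = r'"
  proof (rule tuples_eqI[OF valid])
    show "r \<in> tuples T" "r' \<in> tuples T" using r r' subtuples_subset by auto
    fix f assume f: "f \<in> set (attrs T)"
    then obtain \<delta> where "(f, \<delta>) \<in> set p" using all by force
    then show "attr_value T r f = attr_value T r' f"
      using attr_value_if_mem_subtuples[OF valid] r r' f by metis
  qed
qed

lemma det_tree_for_query_tree:
  assumes valid: "valid_table k T" and k: "0 < k" and fs: "set fs = set (attrs T)"
  shows "det_tree_for k T [query_tree k fs (decision_for T)]"
proof -
  have cpath_iff: "cpath [query_tree k fs (decision_for T)] p d \<longleftrightarrow>
      map fst p = fs \<and> (\<forall>x \<in> set p. snd x < k) \<and> d = decision_for T p" for p d
    unfolding cpath_def by (simp add: path_query_tree_iff)
  have "nondet_tree_for k T [query_tree k fs (decision_for T)]"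
  proof (rule nondet_tree_forI[OF valid])
    show "is_dtree k [query_tree k fs (decision_for T)]"
      unfolding is_dtree_def using wf_node_query_tree[OF k] by simp
    show "f \<in> set (attrs T)" if "t \<in> set [query_tree k fs (decision_for T)]" "has_attr t f" for t f
      using that fs by (auto dest: has_attr_query_tree)
    fix r assume r: "r \<in> tuples T"
    let ?p = "map (\<lambda>f. (f, attr_value T r f)) fs"
    have "cpath [query_tree k fs (decision_for T)] ?p (decision_for T ?p)"
      unfolding cpath_iff using attr_value_less[OF valid r] fs by (auto simp: comp_def)
    moreover have "r \<in> subtuples T ?p" using r by (auto simp: subtuples_iff[OF valid])
    ultimately show "\<exists>p d. cpath [query_tree k fs (decision_for T)] p d \<and> r \<in> subtuples T p" by blast
  qed (use cpath_iff fs identifies_row_if_queries_all_attrs[OF valid] in auto)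
  then show ?thesis
    unfolding det_tree_for_def is_deterministic_def by (simp add: det_node_query_tree)
qed

lemma psi_tree_query_tree: "0 < k \<Longrightarrow> psi_tree \<psi> [query_tree k fs L] = \<psi> fs"
proof -
  assume k: "0 < k"
  obtain p d where "path (query_tree k fs L) p d"
    using wf_node_has_path[OF wf_node_query_tree[OF k]] by blast
  then have "cpath [query_tree k fs L] p d" and "map fst p = fs"
    unfolding cpath_def by (simp_all add: path_query_tree_iff)
  then have "\<psi> fs \<le> psi_tree \<psi> [query_tree k fs L]" using psi_tree_ge by metis
  moreover have "psi_tree \<psi> [query_tree k fs L] \<le> \<psi> fs"
    using wf_node_query_tree[OF k]
    by (intro psi_tree_le[of k]) (simp_all add: is_dtree_def cpath_def path_query_tree_iff)
  ultimately show ?thesis by simp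
qed

lemma psi_of_CD_le_word:
  "valid_table k T \<Longrightarrow> 0 < k \<Longrightarrow> set fs = set (attrs T) \<Longrightarrow> psi_of k \<psi> CD T \<le> \<psi> fs"
  using psi_of_CD_le[OF det_tree_for_query_tree] psi_tree_query_tree by metis

lemma psi_of_CD_le_CI: "valid_table k T \<Longrightarrow> 0 < k \<Longrightarrow> psi_of k \<psi> CD T \<le> psi_of k \<psi> CI T"
  using psi_of_CD_le_word[of k T "attrs T"] by simp

lemma obtain_optimal_det_tree:
  assumes "valid_table k T" "0 < k"
  obtains \<Gamma> where "det_tree_for k T \<Gamma>" "psi_tree \<psi> \<Gamma> = psi_of k \<psi> CD T"
proof -
  have exists: "\<exists>\<Gamma>. det_tree_for k T \<Gamma>" using det_tree_for_query_tree[OF assms refl] by blast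
  have "\<exists>\<Gamma>. det_tree_for k T \<Gamma> \<and> psi_tree \<psi> \<Gamma> = psi_of k \<psi> CD T"
    unfolding psi_of_def cx.case
    by (rule LeastI_ex[where P = "\<lambda>m. \<exists>\<Gamma>. det_tree_for k T \<Gamma> \<and> psi_tree \<psi> \<Gamma> = m"])
      (use exists in blast)
  then show thesis using that by blast
qed

lemma obtain_optimal_nondet_tree:
  assumes "valid_table k T" "0 < k"
  obtains \<Gamma> where "nondet_tree_for k T \<Gamma>" "psi_tree \<psi> \<Gamma> = psi_of k \<psi> CA T"
proof -
  have exists: "\<exists>\<Gamma>. nondet_tree_for k T \<Gamma>"
    using det_tree_for_query_tree[OF assms refl] unfolding det_tree_for_def by blast
  have "\<exists>\<Gamma>. nondet_tree_for k T \<Gamma> \<and> psi_tree \<psi> \<Gamma> = psi_of k \<psi> CA T"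
    unfolding psi_of_def cx.case
    by (rule LeastI_ex[where P = "\<lambda>m. \<exists>\<Gamma>. nondet_tree_for k T \<Gamma> \<and> psi_tree \<psi> \<Gamma> = m"])
      (use exists in blast)
  then show thesis using that by blast
qed

lemma psi_of_CA_le_CD: "valid_table k T \<Longrightarrow> 0 < k \<Longrightarrow> psi_of k \<psi> CA T \<le> psi_of k \<psi> CD T"
  by (metis obtain_optimal_det_tree psi_of_CA_le det_tree_for_def)

lemma det_tree_for_root_attr:
  assumes valid: "valid_table k T" and \<Gamma>: "det_tree_for k T \<Gamma>"
  obtains f where "f \<in> set (attrs T)" "\<And>q d. cpath \<Gamma> q d \<Longrightarrow> q \<noteq> [] \<Longrightarrow> fst (hd q) = f"
proof -
  obtain t where t: "\<Gamma> = [t]"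
    using \<Gamma> unfolding det_tree_for_def is_deterministic_def by (cases \<Gamma>) auto
  show thesis
  proof (cases t)
    case (Term d)
    have "hd (attrs T) \<in> set (attrs T)" using valid unfolding valid_table_def by simp
    then show thesis by (rule that) (auto simp: t Term cpath_def)
  next
    case (Work f es)
    have "f \<in> set (attrs T)"
      using \<Gamma> has_attr.intros(1)[of f es] unfolding det_tree_for_def nondet_tree_for_def t Work by auto
    moreover have "fst (hd q) = f" if "cpath \<Gamma> q d" for q d
      using that by (auto simp: t Work cpath_def path_Work_iff)
    ultimately show thesis using that by blast
  qed
qed

definition common_decision :: "'f dtable \<Rightarrow> bool" where
  "common_decision T \<longleftrightarrow> (\<exists>d. \<forall>(r, D) \<in> set (rows T). d \<in> D)"

lemma psi_of_le_Nil_if_common_decision: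
  assumes "common_decision T"
  shows "psi_of k \<psi> CD T \<le> \<psi> []" and "psi_of k \<psi> CA T \<le> \<psi> []"
proof -
  obtain d where d: "\<forall>(r, D) \<in> set (rows T). d \<in> D" using assms unfolding common_decision_def by blast
  have cpath_iff: "cpath [Term d] p d' \<longleftrightarrow> p = [] \<and> d' = d" for p :: "('f \<times> nat) list" and d'
    unfolding cpath_def by auto
  have nondet: "nondet_tree_for k T [Term d]"
    unfolding nondet_tree_for_def is_dtree_def cpath_iff using d by (auto intro: wf_node.intros)
  then have det: "det_tree_for k T [Term d]"
    unfolding det_tree_for_def is_deterministic_def by (simp add: det_node.intros)
  have "psi_tree \<psi> [Term d] = \<psi> []" unfolding psi_tree_def cpath_iff by simp
  then show "psi_of k \<psi> CD T \<le> \<psi> []" "psi_of k \<psi> CA T \<le> \<psi> []"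
    using psi_of_CD_le[OF det, of \<psi>] psi_of_CA_le[OF nondet, of \<psi>] by simp_all
qed

lemma psi_of_CA_ge:
  assumes valid: "valid_table k T" and k: "0 < k" and no_common: "\<not> common_decision T"
    and bound: "\<And>w. w \<noteq> [] \<Longrightarrow> set w \<subseteq> set (attrs T) \<Longrightarrow> m \<le> \<psi> w"
  shows "m \<le> psi_of k \<psi> CA T"
proof -
  obtain \<Gamma> where \<Gamma>: "nondet_tree_for k T \<Gamma>" "psi_tree \<psi> \<Gamma> = psi_of k \<psi> CA T"
    using obtain_optimal_nondet_tree[OF valid k] by blast
  obtain r D where "(r, D) \<in> set (rows T)"
    using no_common unfolding common_decision_def by (cases "rows T") auto
  then obtain p d where p: "cpath \<Gamma> p d" "r \<in> subtuples T p"
    using nondet_tree_for_covers[OF \<Gamma>(1)] tuplesI by metis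
  have "p \<noteq> []"
  proof
    assume "p = []"
    then have "\<forall>(r', D') \<in> set (rows T). d \<in> D'"
      using nondet_tree_for_decision[OF \<Gamma>(1) _ p(1)] tuplesI by fastforce
    then show False using no_common unfolding common_decision_def by blast
  qed
  then have "m \<le> \<psi> (map fst p)" using bound nondet_tree_for_path_attrs[OF \<Gamma>(1) p(1)] by simp
  also have "\<dots> \<le> psi_of k \<psi> CA T" using psi_tree_ge[OF p(1), of \<psi>] \<Gamma>(2) by simp
  finally show ?thesis .
qed

text \<open>Otherwise the second row would follow the path of the first one and receive the same decision.\<close>
lemma separating_attr_on_path:
  assumes valid: "valid_table k T" and \<Gamma>: "nondet_tree_for k T \<Gamma>"
    and rows: "(r1, D1) \<in> set (rows T)" "(r2, D2) \<in> set (rows T)" and disjoint: "D1 \<inter> D2 = {}"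
    and agree: "\<And>f. f \<in> set (attrs T) \<Longrightarrow> f \<noteq> g \<Longrightarrow> attr_value T r1 f = attr_value T r2 f"
  obtains p d where "cpath \<Gamma> p d" "g \<in> set (map fst p)"
proof -
  obtain p d where p: "cpath \<Gamma> p d" "r1 \<in> subtuples T p"
    using nondet_tree_for_covers[OF \<Gamma>] tuplesI[OF rows(1)] by metis
  have "g \<in> set (map fst p)"
  proof (rule ccontr)
    assume g: "g \<notin> set (map fst p)"
    have "r2 \<in> subtuples T p"
      using p(2) g agree tuplesI[OF rows(2)] unfolding subtuples_iff[OF valid] by force
    then have "d \<in> D1 \<inter> D2"
      using nondet_tree_for_decision[OF \<Gamma>] rows p by blast
    then show False using disjoint by blast
  qed
  then show thesis using that p(1) by blast
qed

section \<open>Types of the functions U\<close>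

lemma U_SomeD:
  assumes "U k C \<psi> b c n = Some m"
  shows "\<exists>T \<in> C. psi_of k \<psi> c T \<le> n \<and> psi_of k \<psi> b T = m"
    and "\<And>T. T \<in> C \<Longrightarrow> psi_of k \<psi> c T \<le> n \<Longrightarrow> psi_of k \<psi> b T \<le> m"
proof -
  let ?S = "{psi_of k \<psi> b T | T. T \<in> C \<and> psi_of k \<psi> c T \<le> n}"
  have S: "?S \<noteq> {}" "finite ?S" "m = Max ?S"
    using assms unfolding U_def Let_def by (auto split: if_splits)
  then have "m \<in> ?S" unfolding S(3) by (intro Max_in)
  then show "\<exists>T \<in> C. psi_of k \<psi> c T \<le> n \<and> psi_of k \<psi> b T = m" by blast
  fix T assume "T \<in> C" "psi_of k \<psi> c T \<le> n"
  then show "psi_of k \<psi> b T \<le> m" using S by (auto intro: Max_ge)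
qed

lemma U_Some_if_bounded:
  assumes "T0 \<in> C" "psi_of k \<psi> c T0 \<le> n"
    and "\<And>T. T \<in> C \<Longrightarrow> psi_of k \<psi> c T \<le> n \<Longrightarrow> psi_of k \<psi> b T \<le> B"
  shows "\<exists>m. U k C \<psi> b c n = Some m"
proof -
  let ?S = "{psi_of k \<psi> b T | T. T \<in> C \<and> psi_of k \<psi> c T \<le> n}"
  have "?S \<noteq> {}" using assms(1,2) by blast
  moreover have "?S \<subseteq> {..B}" using assms(3) by blast
  then have "finite ?S" by (rule finite_subset) simp
  ultimately show ?thesis unfolding U_def Let_def by simp
qed

lemma U_None_if_unbounded:
  assumes "\<And>M. \<exists>T \<in> C. psi_of k \<psi> c T \<le> n \<and> M \<le> psi_of k \<psi> b T"
  shows "U k C \<psi> b c n = None"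
proof (rule ccontr)
  assume "U k C \<psi> b c n \<noteq> None"
  then obtain m where m: "U k C \<psi> b c n = Some m" by blast
  obtain T where "T \<in> C" "psi_of k \<psi> c T \<le> n" "Suc m \<le> psi_of k \<psi> b T" using assms by blast
  then show False using U_SomeD(2)[OF m] by fastforce
qed

lemma has_typ_alpha_if_bounded:
  assumes bounded: "\<And>T. T \<in> C \<Longrightarrow> psi_of k \<psi> b T \<le> B" and "T0 \<in> C"
  shows "has_typ (U k C \<psi> b c) T\<alpha>"
proof -
  have "{psi_of k \<psi> c T0..} \<subseteq> pdom (U k C \<psi> b c)"
    using U_Some_if_bounded[OF \<open>T0 \<in> C\<close> _ bounded] unfolding pdom_def by fastforce
  then have "infinite (pdom (U k C \<psi> b c))" using infinite_Ici infinite_super by blast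
  moreover have "bdd_above_p (U k C \<psi> b c)"
    unfolding bdd_above_p_def using U_SomeD(1) bounded by metis
  ultimately show ?thesis unfolding has_typ_def by simp
qed

lemma has_typ_gamma_if_diagonal_unbounded:
  assumes le: "\<And>T. T \<in> C \<Longrightarrow> psi_of k \<psi> b T \<le> psi_of k \<psi> c T"
    and diagonal: "\<And>M. \<exists>T \<in> C. M \<le> psi_of k \<psi> c T \<and> psi_of k \<psi> b T = psi_of k \<psi> c T"
  shows "has_typ (U k C \<psi> b c) T\<gamma>"
proof -
  have fixpoint: "U k C \<psi> b c (psi_of k \<psi> c T) = Some (psi_of k \<psi> c T)"
    if T: "T \<in> C" "psi_of k \<psi> b T = psi_of k \<psi> c T" for T
  proof -
    have "\<exists>m. U k C \<psi> b c (psi_of k \<psi> c T) = Some m"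
      by (rule U_Some_if_bounded[OF T(1) order_refl, where B = "psi_of k \<psi> c T"])
        (meson le order_trans)
    then obtain m where m: "U k C \<psi> b c (psi_of k \<psi> c T) = Some m" by blast
    have "m \<le> psi_of k \<psi> c T" using U_SomeD(1)[OF m] le by force
    moreover have "psi_of k \<psi> b T \<le> m" using U_SomeD(2)[OF m T(1) order_refl] .
    ultimately show ?thesis using m T(2) by simp
  qed
  let ?N = "{psi_of k \<psi> c T | T. T \<in> C \<and> psi_of k \<psi> b T = psi_of k \<psi> c T}"
  have "infinite ?N"
    unfolding infinite_nat_iff_unbounded_le
  proof
    fix M
    obtain T where "T \<in> C" "M \<le> psi_of k \<psi> c T" "psi_of k \<psi> b T = psi_of k \<psi> c T"
      using diagonal by blast
    then show "\<exists>n \<ge> M. n \<in> ?N" by blast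
  qed
  moreover have "?N \<subseteq> pdom_plus (U k C \<psi> b c)" "?N \<subseteq> pdom_minus (U k C \<psi> b c)"
    unfolding pdom_plus_def pdom_minus_def using fixpoint by auto
  ultimately have "infinite (pdom_plus (U k C \<psi> b c))" "infinite (pdom_minus (U k C \<psi> b c))"
    using infinite_super by blast+
  then show ?thesis unfolding has_typ_def by simp
qed

lemma has_typ_epsilon_if_unbounded:
  assumes "\<And>n M. N \<le> n \<Longrightarrow> \<exists>T \<in> C. psi_of k \<psi> c T \<le> n \<and> M \<le> psi_of k \<psi> b T"
  shows "has_typ (U k C \<psi> b c) T\<epsilon>"
proof -
  have "pdom (U k C \<psi> b c) \<subseteq> {..<N}"
  proof
    fix n assume "n \<in> pdom (U k C \<psi> b c)"
    then have "U k C \<psi> b c n \<noteq> None" unfolding pdom_def by simp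
    then show "n \<in> {..<N}" using U_None_if_unbounded assms by (meson lessThan_iff not_le)
  qed
  then show ?thesis unfolding has_typ_def using finite_subset by auto
qed

lemma has_typ_beta_if_below_diagonal:
  assumes le: "\<And>T. T \<in> C \<Longrightarrow> psi_of k \<psi> b T \<le> psi_of k \<psi> c T" and "T0 \<in> C"
    and below: "\<And>T. T \<in> C \<Longrightarrow> psi_of k \<psi> b T \<le> 1 \<or> psi_of k \<psi> b T < psi_of k \<psi> c T"
    and unbounded: "\<And>M. \<exists>T \<in> C. M \<le> psi_of k \<psi> b T"
  shows "has_typ (U k C \<psi> b c) T\<beta>"
proof -
  have defined: "\<exists>m. U k C \<psi> b c n = Some m" if "T \<in> C" "psi_of k \<psi> c T \<le> n" for T n
    using U_Some_if_bounded[OF that] le order_trans by metis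
  have "{psi_of k \<psi> c T0..} \<subseteq> pdom (U k C \<psi> b c)"
    using defined[OF \<open>T0 \<in> C\<close>] unfolding pdom_def by fastforce
  then have "infinite (pdom (U k C \<psi> b c))" using infinite_Ici infinite_super by blast
  moreover have "pdom_plus (U k C \<psi> b c) \<subseteq> {..1}"
  proof
    fix n assume "n \<in> pdom_plus (U k C \<psi> b c)"
    then obtain m where m: "U k C \<psi> b c n = Some m" "n \<le> m" unfolding pdom_plus_def by blast
    then obtain T where T: "T \<in> C" "psi_of k \<psi> c T \<le> n" "psi_of k \<psi> b T = m" using U_SomeD(1) by blast
    then show "n \<in> {..1}" using below[OF T(1)] m(2) by auto
  qed
  then have "finite (pdom_plus (U k C \<psi> b c))" using finite_subset by blast
  moreover have "\<not> bdd_above_p (U k C \<psi> b c)"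
  proof
    assume "bdd_above_p (U k C \<psi> b c)"
    then obtain B where B: "\<And>n m. U k C \<psi> b c n = Some m \<Longrightarrow> m \<le> B" unfolding bdd_above_p_def by blast
    obtain T where T: "T \<in> C" "Suc B \<le> psi_of k \<psi> b T" using unbounded by blast
    obtain m where m: "U k C \<psi> b c (psi_of k \<psi> c T) = Some m" using defined[OF T(1) order_refl] by blast
    then have "psi_of k \<psi> b T \<le> B" using U_SomeD(2)[OF m T(1) order_refl] B[OF m] by simp
    then show False using T(2) by simp
  qed
  ultimately show ?thesis unfolding has_typ_def by simp
qed

lemma has_typ_delta_if_above_diagonal:
  assumes bound: "\<And>n T. T \<in> C \<Longrightarrow> psi_of k \<psi> c T \<le> n \<Longrightarrow> psi_of k \<psi> b T \<le> g n"
    and "T0 \<in> C" "psi_of k \<psi> c T0 = 0"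
    and above: "\<And>n. 1 \<le> n \<Longrightarrow> \<exists>T \<in> C. psi_of k \<psi> c T \<le> n \<and> n < psi_of k \<psi> b T"
  shows "has_typ (U k C \<psi> b c) T\<delta>"
proof -
  have "\<exists>m. U k C \<psi> b c n = Some m" for n
    by (rule U_Some_if_bounded[OF \<open>T0 \<in> C\<close>, where B = "g n"])
      (use \<open>psi_of k \<psi> c T0 = 0\<close> bound in auto)
  then have "pdom (U k C \<psi> b c) = UNIV" unfolding pdom_def by auto
  moreover have "pdom_minus (U k C \<psi> b c) \<subseteq> {0}"
  proof
    fix n assume "n \<in> pdom_minus (U k C \<psi> b c)"
    then obtain m where m: "U k C \<psi> b c n = Some m" "m \<le> n" unfolding pdom_minus_def by blast
    show "n \<in> {0}"
    proof (rule ccontr)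
      assume "n \<notin> {0}"
      then have "1 \<le> n" by simp
      then obtain T where T: "T \<in> C" "psi_of k \<psi> c T \<le> n" "n < psi_of k \<psi> b T" using above by blast
      then show False using U_SomeD(2)[OF m(1) T(1,2)] m(2) by simp
    qed
  qed
  ultimately show ?thesis unfolding has_typ_def using finite_subset by auto
qed

section \<open>The class of pattern tables\<close>

definition triple :: "nat \<Rightarrow> nat set" where
  "triple p = {3 * p, 3 * p + 1, 3 * p + 2}"

definition patterns :: "nat list set" where
  "patterns = {[0, 0, 0], [0, 0, 1], [1, 1, 1], [2, 1, 1], [1, 0, 2], [1, 2, 2]}"

definition follows_patterns :: "nat dtable \<Rightarrow> bool" where
  "follows_patterns T \<longleftrightarrow>
     (\<forall>r \<in> tuples T. \<exists>s \<in> patterns. \<forall>i < length (attrs T). r ! i = s ! (attrs T ! i mod 3))"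

definition pattern_class :: "nat dtable set" where
  "pattern_class = {T. valid_table 3 T \<and> (\<exists>p. set (attrs T) \<subseteq> triple p) \<and> follows_patterns T}"

lemma follows_patterns_selects_columns:
  assumes "follows_patterns T" and sel: "selects_columns T ids T'"
  shows "follows_patterns T'"
  unfolding follows_patterns_def
proof
  fix r' assume "r' \<in> tuples T'"
  then obtain D' where "(r', D') \<in> set (rows T')" by (rule tuplesE)
  then obtain r where r: "r \<in> tuples T" "r' = map ((!) r) ids"
    using sel unfolding selects_columns_def by blast
  then obtain s where s: "s \<in> patterns" "\<forall>i < length (attrs T). r ! i = s ! (attrs T ! i mod 3)"
    using assms(1) unfolding follows_patterns_def by blast
  have "\<forall>i < length (attrs T'). r' ! i = s ! (attrs T' ! i mod 3)"
    using sel s(2) r(2) unfolding selects_columns_def by (auto simp: subset_iff)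
  then show "\<exists>s \<in> patterns. \<forall>i < length (attrs T'). r' ! i = s ! (attrs T' ! i mod 3)"
    using s(1) by blast
qed

lemma closed_class_pattern_class: "closed_class 3 pattern_class"
proof (rule closed_classI)
  show "\<forall>T \<in> pattern_class. valid_table 3 T" unfolding pattern_class_def by blast
  fix T ids T' assume T: "T \<in> pattern_class" and sel: "selects_columns T ids T'"
  then obtain p where p: "set (attrs T) \<subseteq> triple p" unfolding pattern_class_def by blast
  have "set (attrs T') \<subseteq> set (attrs T)" using sel unfolding selects_columns_def by auto
  then show "T' \<in> pattern_class"
    using T p valid_table_selects_columns[OF _ sel] follows_patterns_selects_columns[OF _ sel]
    unfolding pattern_class_def by blast
qed

section \<open>The level measures\<close>

definition partner :: "nat \<Rightarrow> nat" where
  "partner f = 3 * (f div 3) + (f + 2) mod 3"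

definition level :: "nat list \<Rightarrow> nat" where
  "level w = (if 3 \<le> card (set w) then 4 else if partner (hd w) \<in> set w then 3
     else if card (set w) = 2 then 2 else 1)"

definition level_measure :: "(nat \<Rightarrow> nat \<Rightarrow> nat) \<Rightarrow> nat list \<Rightarrow> nat" where
  "level_measure F w = (if w = [] then 0 else F (hd w div 3) (level w))"

abbreviation cost :: "(nat \<Rightarrow> nat \<Rightarrow> nat) \<Rightarrow> cx \<Rightarrow> nat dtable \<Rightarrow> nat" where
  "cost F b T \<equiv> psi_of 3 (level_measure F) b T"

definition block :: "nat dtable \<Rightarrow> nat" where
  "block T = hd (attrs T) div 3"

lemma less_3_iff: "(i :: nat) < 3 \<longleftrightarrow> i = 0 \<or> i = 1 \<or> i = 2"
  by auto

lemma partner_simps [simp]: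
  "partner (3 * p) = Suc (Suc (3 * p))" "partner (Suc (3 * p)) = 3 * p"
  "partner (Suc (Suc (3 * p))) = Suc (3 * p)"
  unfolding partner_def by presburger+

lemma triple_cases:
  assumes "f \<in> triple p"
  obtains "f = 3 * p" | "f = 3 * p + 1" | "f = 3 * p + 2"
  using assms unfolding triple_def by blast

lemma card_triple: "card (triple p) = 3"
  unfolding triple_def by simp

lemma div_3_triple: "f \<in> triple p \<Longrightarrow> f div 3 = p"
  by (elim triple_cases) simp_all

lemma triple_eq_partner_orbit: "f \<in> triple p \<Longrightarrow> triple p = {f, partner f, partner (partner f)}"
  by (elim triple_cases) (auto simp: triple_def)

lemma level_cases: "level w \<in> {1, 2, 3, 4}"
  unfolding level_def by simp

lemma level_ge_3: "partner (hd w) \<in> set w \<Longrightarrow> 3 \<le> level w"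
  unfolding level_def by simp

lemma level_eq_4: "set w = triple p \<Longrightarrow> level w = 4"
  unfolding level_def by (simp add: card_triple)

lemma level_le_2: "card (set w) < 3 \<Longrightarrow> partner (hd w) \<notin> set w \<Longrightarrow> level w \<le> 2"
  unfolding level_def by simp

lemma level_measure_eq:
  "w \<noteq> [] \<Longrightarrow> set w \<subseteq> triple p \<Longrightarrow> level_measure F w = F p (level w)"
  unfolding level_measure_def using div_3_triple[of "hd w" p] by (cases w) auto

lemma exists_word_level_le_2:
  assumes S: "S \<subseteq> triple p" "S \<noteq> {}" "S \<noteq> triple p"
  obtains w where "set w = S" "w \<noteq> []" "level w \<le> 2"
proof -
  have "\<exists>f \<in> S. partner f \<notin> S"
  proof (rule ccontr)
    assume closed: "\<not> (\<exists>f \<in> S. partner f \<notin> S)"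
    obtain f where f: "f \<in> S" using S(2) by blast
    then have orbit: "partner f \<in> S" "partner (partner f) \<in> S" using closed by blast+
    have "triple p = {f, partner f, partner (partner f)}"
      using f S(1) by (intro triple_eq_partner_orbit) blast
    then have "triple p \<subseteq> S" using f orbit by simp
    then show False using S by blast
  qed
  then obtain f where f: "f \<in> S" "partner f \<notin> S" by blast
  have "S \<subset> triple p" using S(1,3) by blast
  then have "card S < card (triple p)" by (rule psubset_card_mono[rotated]) (simp add: triple_def)
  then have card: "card S < 3" by (simp add: card_triple)
  have finite: "finite S" using S(1) by (rule finite_subset) (simp add: triple_def)
  let ?w = "f # sorted_list_of_set S"
  have set_w: "set ?w = S" using f(1) finite by auto
  then have "level ?w \<le> 2" using level_le_2[of ?w] card f(2) by simp
  then show thesis using that[of ?w] set_w by simp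
qed

lemma pattern_class_valid: "T \<in> pattern_class \<Longrightarrow> valid_table 3 T"
  unfolding pattern_class_def by blast

lemma attrs_subset_triple_block:
  assumes "T \<in> pattern_class"
  shows "set (attrs T) \<subseteq> triple (block T)"
proof -
  obtain p where p: "set (attrs T) \<subseteq> triple p" using assms unfolding pattern_class_def by blast
  have "attrs T \<noteq> []" using pattern_class_valid[OF assms] unfolding valid_table_def by blast
  then have "block T = p" using p div_3_triple unfolding block_def by (cases "attrs T") auto
  then show ?thesis using p by simp
qed

lemma cost_CI: "T \<in> pattern_class \<Longrightarrow> cost F CI T = F (block T) (level (attrs T))"
  using level_measure_eq[OF _ attrs_subset_triple_block] pattern_class_valid
  unfolding valid_table_def by simp

lemma cost_common_decision: "common_decision T \<Longrightarrow> cost F CD T = 0 \<and> cost F CA T = 0"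
  using psi_of_le_Nil_if_common_decision[of T 3 "level_measure F"] by (simp add: level_measure_def)

lemma cost_CA_ge:
  assumes T: "T \<in> pattern_class" and "\<not> common_decision T" and bound: "\<And>l. m \<le> F (block T) l"
  shows "m \<le> cost F CA T"
proof (rule psi_of_CA_ge[OF pattern_class_valid[OF T] _ \<open>\<not> common_decision T\<close>])
  fix w :: "nat list" assume "w \<noteq> []" "set w \<subseteq> set (attrs T)"
  then show "m \<le> level_measure F w"
    using level_measure_eq attrs_subset_triple_block[OF T] bound by (metis order_trans)
qed simp

lemma cost_CD_le_CI: "T \<in> pattern_class \<Longrightarrow> cost F CD T \<le> cost F CI T"
  using psi_of_CD_le_CI[OF pattern_class_valid] by simp

lemma cost_CA_le_CD: "T \<in> pattern_class \<Longrightarrow> cost F CA T \<le> cost F CD T"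
  using psi_of_CA_le_CD[OF pattern_class_valid] by simp

lemma cost_CD_le_partial:
  assumes T: "T \<in> pattern_class" and partial: "set (attrs T) \<noteq> triple (block T)"
  shows "cost F CD T \<le> max (F (block T) 1) (F (block T) 2)"
proof -
  have "set (attrs T) \<noteq> {}" using pattern_class_valid[OF T] unfolding valid_table_def by simp
  then obtain w where w: "set w = set (attrs T)" "w \<noteq> []" "level w \<le> 2"
    using exists_word_level_le_2[OF attrs_subset_triple_block[OF T] _ partial] by blast
  have "cost F CD T \<le> level_measure F w"
    using psi_of_CD_le_word[OF pattern_class_valid[OF T] _ w(1)] by simp
  also have "\<dots> = F (block T) (level w)"
    using level_measure_eq[OF w(2)] w(1) attrs_subset_triple_block[OF T] by simp
  also have "\<dots> \<le> max (F (block T) 1) (F (block T) 2)"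
    using w(3) level_cases[of w] by auto
  finally show ?thesis .
qed

lemma add_mem_triple: "j < 3 \<Longrightarrow> 3 * p + j \<in> triple p"
  unfolding triple_def by (auto simp: less_3_iff)

definition row_pattern :: "nat dtable \<Rightarrow> nat \<Rightarrow> nat list \<Rightarrow> nat list" where
  "row_pattern T p r = map (\<lambda>j. attr_value T r (3 * p + j)) [0, 1, 2]"

lemma attr_value_eq_row_pattern: "j < 3 \<Longrightarrow> attr_value T r (3 * p + j) = row_pattern T p r ! j"
  unfolding row_pattern_def by (auto simp: less_3_iff)

lemma length_row_pattern [simp]: "length (row_pattern T p r) = 3"
  unfolding row_pattern_def by simp

lemma row_pattern_mem_patterns:
  assumes T: "T \<in> pattern_class" and full: "set (attrs T) = triple p" and r: "r \<in> tuples T"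
  shows "row_pattern T p r \<in> patterns"
proof -
  obtain s where s: "s \<in> patterns" "\<forall>i < length (attrs T). r ! i = s ! (attrs T ! i mod 3)"
    using T r unfolding pattern_class_def follows_patterns_def by blast
  have "attr_value T r (3 * p + j) = s ! j" if j: "j < 3" for j
  proof -
    obtain i where i: "i < length (attrs T)" "attrs T ! i = 3 * p + j"
      using add_mem_triple[OF j] full by (metis in_set_conv_nth)
    then show ?thesis
      using nth_tuple_eq_attr_value[OF pattern_class_valid[OF T] r i(1)] s(2) j by simp
  qed
  moreover have "length s = 3" using s(1) unfolding patterns_def by auto
  ultimately have "row_pattern T p r = s"
    by (intro nth_equalityI) (simp_all add: attr_value_eq_row_pattern[symmetric])
  then show ?thesis using s(1) by simp
qed

lemma identifies_row_if_row_pattern_eq: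
  assumes valid: "valid_table k T" and full: "set (attrs T) = triple p"
    and eq: "\<And>r r'. r \<in> subtuples T q \<Longrightarrow> r' \<in> subtuples T q \<Longrightarrow>
      row_pattern T p r = row_pattern T p r'"
  shows "identifies_row T q"
  unfolding identifies_row_def
proof (intro ballI)
  fix r r' assume q: "r \<in> subtuples T q" "r' \<in> subtuples T q"
  show "r = r'"
  proof (rule tuples_eqI[OF valid])
    show "r \<in> tuples T" "r' \<in> tuples T" using q subtuples_subset by auto
    fix f assume "f \<in> set (attrs T)"
    then obtain j where "j < 3" "f = 3 * p + j" using full by (auto elim: triple_cases)
    then show "attr_value T r f = attr_value T r' f" using eq[OF q] by (simp add: attr_value_eq_row_pattern)
  qed
qed

text \<open>After the first entry u of a pattern, entry 2 (if u = 0) or entry 1 (otherwise) tells it apart.\<close>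
definition second_query :: "nat \<Rightarrow> nat \<Rightarrow> nat" where
  "second_query p u = (if u = 0 then 3 * p + 2 else 3 * p + 1)"

lemma patterns_eq_by_two_queries:
  assumes "s \<in> patterns" "s' \<in> patterns" "s ! 0 = s' ! 0"
    and "s ! (second_query 0 (s ! 0)) = s' ! (second_query 0 (s ! 0))"
  shows "s = s'"
  using assms unfolding patterns_def second_query_def by auto

lemma second_query_mem_triple: "second_query p u \<in> triple p"
  unfolding second_query_def triple_def by simp

definition adaptive_tree :: "nat dtable \<Rightarrow> nat \<Rightarrow> nat dnode" where
  "adaptive_tree T p = Work (3 * p)
     (map (\<lambda>u. (u, query_tree 3 [second_query p u] (\<lambda>q. decision_for T ((3 * p, u) # q)))) [0..<3])"

lemma path_adaptive_tree_iff:
  "path (adaptive_tree T p) q d \<longleftrightarrow>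
     (\<exists>u < 3. \<exists>v < 3. q = [(3 * p, u), (second_query p u, v)] \<and> d = decision_for T q)"
proof -
  have "path (query_tree 3 [second_query p u] L) q' d \<longleftrightarrow>
      (\<exists>v < 3. q' = [(second_query p u, v)] \<and> d = L q')" for u L q'
    unfolding path_query_tree_iff by (cases q') auto
  then show ?thesis
    unfolding adaptive_tree_def path_Work_iff set_map image_iff
    by (auto simp del: query_tree.simps)
qed

lemma identifies_row_two_queries:
  assumes T: "T \<in> pattern_class" and full: "set (attrs T) = triple p"
  shows "identifies_row T [(3 * p, u), (second_query p u, v)]" (is "identifies_row T ?q")
proof (rule identifies_row_if_row_pattern_eq[OF pattern_class_valid[OF T] full])
  have valid: "valid_table 3 T" using pattern_class_valid[OF T] .
  have mem: "(3 * p, u) \<in> set ?q" "(second_query p u, v) \<in> set ?q" by simp_all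
  have in_attrs: "3 * p \<in> set (attrs T)" "second_query p u \<in> set (attrs T)"
    using add_mem_triple[of 0 p] second_query_mem_triple full by simp_all
  fix r1 r2 assume r1: "r1 \<in> subtuples T ?q" and r2: "r2 \<in> subtuples T ?q"
  have rows: "r1 \<in> tuples T" "r2 \<in> tuples T" using r1 r2 subtuples_subset by auto
  have entries: "attr_value T r1 (3 * p) = u" "attr_value T r2 (3 * p) = u"
    "attr_value T r1 (second_query p u) = v" "attr_value T r2 (second_query p u) = v"
    using attr_value_if_mem_subtuples[OF valid r1 mem(1) in_attrs(1)]
      attr_value_if_mem_subtuples[OF valid r2 mem(1) in_attrs(1)]
      attr_value_if_mem_subtuples[OF valid r1 mem(2) in_attrs(2)]
      attr_value_if_mem_subtuples[OF valid r2 mem(2) in_attrs(2)] .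
  have "second_query p u = 3 * p + second_query 0 u" unfolding second_query_def by simp
  then show "row_pattern T p r1 = row_pattern T p r2"
    using entries patterns_eq_by_two_queries row_pattern_mem_patterns[OF T full] rows
      attr_value_eq_row_pattern[of 0] attr_value_eq_row_pattern[of "second_query 0 u"]
    by (simp add: second_query_def split: if_splits)
qed

lemma det_tree_for_adaptive_tree:
  assumes T: "T \<in> pattern_class" and full: "set (attrs T) = triple p"
  shows "is_dtree 3 [adaptive_tree T p]" and "det_tree_for 3 T [adaptive_tree T p]"
proof -
  have valid: "valid_table 3 T" using pattern_class_valid[OF T] .
  have cpath_iff: "cpath [adaptive_tree T p] q d \<longleftrightarrow>
      (\<exists>u < 3. \<exists>v < 3. q = [(3 * p, u), (second_query p u, v)] \<and> d = decision_for T q)" for q d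
    unfolding cpath_def by (simp add: path_adaptive_tree_iff)
  have in_attrs: "3 * p \<in> set (attrs T)" "second_query p u \<in> set (attrs T)" for u
    using add_mem_triple[of 0 p] second_query_mem_triple full by simp_all
  show tree: "is_dtree 3 [adaptive_tree T p]"
    unfolding is_dtree_def adaptive_tree_def by (auto simp: wf_node_Work_iff intro!: wf_node.intros)
  have "nondet_tree_for 3 T [adaptive_tree T p]"
  proof (rule nondet_tree_forI[OF valid tree])
    show "f \<in> set (attrs T)" if "t \<in> set [adaptive_tree T p]" "has_attr t f" for t f
      using that in_attrs by (auto simp: adaptive_tree_def has_attr_Work_iff dest: has_attr_query_tree)
    fix r assume r: "r \<in> tuples T"
    let ?u = "attr_value T r (3 * p)"
    let ?q = "[(3 * p, ?u), (second_query p ?u, attr_value T r (second_query p ?u))]"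
    have "cpath [adaptive_tree T p] ?q (decision_for T ?q)"
      unfolding cpath_iff using attr_value_less[OF valid r] in_attrs by auto
    moreover have "r \<in> subtuples T ?q" using r by (simp add: subtuples_iff[OF valid])
    ultimately show "\<exists>q d. cpath [adaptive_tree T p] q d \<and> r \<in> subtuples T q" by blast
  next
    fix q d assume "cpath [adaptive_tree T p] q d"
    then obtain u v where "q = [(3 * p, u), (second_query p u, v)]" "d = decision_for T q"
      unfolding cpath_iff by blast
    then show "identifies_row T q \<and> d = decision_for T q"
      using identifies_row_two_queries[OF T full] by simp
  qed
  then show "det_tree_for 3 T [adaptive_tree T p]"
    unfolding det_tree_for_def is_deterministic_def adaptive_tree_def
    by (auto simp: det_node_Work_iff comp_def det_node_query_tree simp del: query_tree.simps)
qed

lemma cost_CD_le_full: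
  assumes T: "T \<in> pattern_class" and full: "set (attrs T) = triple p"
  shows "cost F CD T \<le> max (F p 2) (F p 3)"
proof -
  have "cost F CD T \<le> psi_tree (level_measure F) [adaptive_tree T p]"
    using det_tree_for_adaptive_tree(2)[OF T full] by (rule psi_of_CD_le)
  also have "\<dots> \<le> max (F p 2) (F p 3)"
  proof (rule psi_tree_le[OF det_tree_for_adaptive_tree(1)[OF T full]])
    fix q d assume "cpath [adaptive_tree T p] q d"
    then have "\<exists>u < 3. \<exists>v < 3. q = [(3 * p, u), (second_query p u, v)] \<and> d = decision_for T q"
      unfolding cpath_def by (simp add: path_adaptive_tree_iff)
    then obtain u v where q: "q = [(3 * p, u), (second_query p u, v)]" by blast
    have "level_measure F (map fst q) = F p (level (map fst q))"
      by (rule level_measure_eq) (auto simp: q second_query_def triple_def)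
    moreover have "level (map fst q) \<in> {2, 3}"
      by (simp add: q second_query_def level_def card_insert_if)
    ultimately show "level_measure F (map fst q) \<le> max (F p 2) (F p 3)" by auto
  qed
  finally show ?thesis .
qed

text \<open>Positions whose entries single out the pattern s, listed so that the word has level at most 2.\<close>
definition certificate :: "nat list \<Rightarrow> nat list" where
  "certificate s = (if s = [0, 0, 0] then [2] else if s = [0, 0, 1] then [2, 0]
     else if s = [1, 1, 1] then [0, 1] else if s = [2, 1, 1] then [0]
     else if s = [1, 0, 2] then [1, 2] else [1])"

lemma certificate_less_3: "j \<in> set (certificate s) \<Longrightarrow> j < 3"
  unfolding certificate_def by (auto split: if_splits)

lemma certificate_nonempty: "certificate s \<noteq> []"
  unfolding certificate_def by simp

lemma patterns_eq_by_certificate: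
  "s \<in> patterns \<Longrightarrow> s' \<in> patterns \<Longrightarrow> \<forall>j \<in> set (certificate s). s' ! j = s ! j \<Longrightarrow>
    s' = s"
  unfolding patterns_def certificate_def by auto

lemma level_certificate: "s \<in> patterns \<Longrightarrow> level (map (\<lambda>j. 3 * p + j) (certificate s)) \<le> 2"
  unfolding patterns_def certificate_def level_def by auto

definition certificate_word :: "nat dtable \<Rightarrow> nat \<Rightarrow> nat list \<Rightarrow> (nat \<times> nat) list" where
  "certificate_word T p r = map (\<lambda>j. (3 * p + j, row_pattern T p r ! j)) (certificate (row_pattern T p r))"

definition certificate_trees :: "nat dtable \<Rightarrow> nat \<Rightarrow> nat dtree" where
  "certificate_trees T p =
     map (\<lambda>r. word_tree (certificate_word T p r) (decision_for T (certificate_word T p r))) (map fst (rows T))"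

lemma mem_subtuples_certificate_word:
  assumes valid: "valid_table k T" and r: "r \<in> tuples T"
  shows "r \<in> subtuples T (certificate_word T p r)"
proof (rule mem_subtuplesI[OF valid r])
  fix f \<delta> assume "(f, \<delta>) \<in> set (certificate_word T p r)"
  then obtain j where "j \<in> set (certificate (row_pattern T p r))" "f = 3 * p + j" "\<delta> = row_pattern T p r ! j"
    unfolding certificate_word_def by auto
  then show "attr_value T r f = \<delta>" using attr_value_eq_row_pattern certificate_less_3 by simp
qed

lemma identifies_row_certificate_word:
  assumes T: "T \<in> pattern_class" and full: "set (attrs T) = triple p" and r: "r \<in> tuples T"
  shows "identifies_row T (certificate_word T p r)"
proof -
  have valid: "valid_table 3 T" using pattern_class_valid[OF T] .
  have "row_pattern T p r' = row_pattern T p r" if r': "r' \<in> subtuples T (certificate_word T p r)" for r'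
  proof (rule patterns_eq_by_certificate[OF row_pattern_mem_patterns[OF T full]
        row_pattern_mem_patterns[OF T full]])
    show "r' \<in> tuples T" using r' subtuples_subset by auto
    show "\<forall>j \<in> set (certificate (row_pattern T p r)). row_pattern T p r' ! j = row_pattern T p r ! j"
    proof
      fix j assume j: "j \<in> set (certificate (row_pattern T p r))"
      then have "(3 * p + j, row_pattern T p r ! j) \<in> set (certificate_word T p r)"
        unfolding certificate_word_def by auto
      then have "attr_value T r' (3 * p + j) = row_pattern T p r ! j"
        using attr_value_if_mem_subtuples[OF valid r'] add_mem_triple[OF certificate_less_3[OF j]] full
        by blast
      then show "row_pattern T p r' ! j = row_pattern T p r ! j"
        using attr_value_eq_row_pattern[OF certificate_less_3[OF j]] by simp
    qed
  qed (fact r)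
  then show ?thesis using identifies_row_if_row_pattern_eq[OF valid full] by metis
qed

lemma nondet_tree_for_certificate_trees:
  assumes T: "T \<in> pattern_class" and full: "set (attrs T) = triple p" and "rows T \<noteq> []"
  shows "is_dtree 3 (certificate_trees T p)" and "nondet_tree_for 3 T (certificate_trees T p)"
proof -
  have valid: "valid_table 3 T" using pattern_class_valid[OF T] .
  have cpath_iff: "cpath (certificate_trees T p) q d \<longleftrightarrow>
      (\<exists>r \<in> tuples T. q = certificate_word T p r \<and> d = decision_for T q)" for q d
    unfolding cpath_def certificate_trees_def tuples_def set_map by (auto simp: path_word_tree_iff)
  have word_attrs: "f \<in> set (attrs T)" if "(f, v) \<in> set (certificate_word T p r)" for f v r
    using that add_mem_triple certificate_less_3 full by (auto simp: certificate_word_def)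
  have word_values: "\<forall>x \<in> set (certificate_word T p r). snd x < 3" if r: "r \<in> tuples T" for r
  proof
    fix x assume "x \<in> set (certificate_word T p r)"
    then obtain j where j: "j \<in> set (certificate (row_pattern T p r))" "x = (3 * p + j, row_pattern T p r ! j)"
      unfolding certificate_word_def by auto
    then show "snd x < 3"
      using attr_value_less[OF valid r] add_mem_triple[OF certificate_less_3] full
        attr_value_eq_row_pattern[OF certificate_less_3[OF j(1)]]
      by (metis snd_conv)
  qed
  show tree: "is_dtree 3 (certificate_trees T p)"
    unfolding is_dtree_def certificate_trees_def
    using \<open>rows T \<noteq> []\<close> wf_node_word_tree[OF word_values] by (auto simp: tuples_def)
  show "nondet_tree_for 3 T (certificate_trees T p)"
  proof (rule nondet_tree_forI[OF valid tree])
    show "f \<in> set (attrs T)" if "t \<in> set (certificate_trees T p)" "has_attr t f" for t f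
      using that word_attrs by (auto simp: certificate_trees_def dest!: has_attr_word_tree)
    show "\<exists>q d. cpath (certificate_trees T p) q d \<and> r \<in> subtuples T q" if "r \<in> tuples T" for r
      using that mem_subtuples_certificate_word[OF valid] unfolding cpath_iff by blast
  next
    fix q d assume "cpath (certificate_trees T p) q d"
    then obtain r where "r \<in> tuples T" "q = certificate_word T p r" "d = decision_for T q"
      unfolding cpath_iff by blast
    then show "identifies_row T q \<and> d = decision_for T q"
      using identifies_row_certificate_word[OF T full] by simp
  qed
qed

lemma cost_CA_le_full:
  assumes T: "T \<in> pattern_class" and full: "set (attrs T) = triple p" and "rows T \<noteq> []"
  shows "cost F CA T \<le> max (F p 1) (F p 2)"
proof -
  have "cost F CA T \<le> psi_tree (level_measure F) (certificate_trees T p)"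
    using nondet_tree_for_certificate_trees(2)[OF assms] by (rule psi_of_CA_le)
  also have "\<dots> \<le> max (F p 1) (F p 2)"
  proof (rule psi_tree_le[OF nondet_tree_for_certificate_trees(1)[OF assms]])
    fix q d assume "cpath (certificate_trees T p) q d"
    then obtain r where r: "r \<in> tuples T" and q: "q = certificate_word T p r"
      unfolding cpath_def certificate_trees_def tuples_def by (auto simp: path_word_tree_iff)
    have word: "map fst q = map (\<lambda>j. 3 * p + j) (certificate (row_pattern T p r))"
      unfolding q certificate_word_def by simp
    have "map fst q \<noteq> []" unfolding word by (simp add: certificate_nonempty)
    moreover have "set (map fst q) \<subseteq> triple p"
      unfolding word using add_mem_triple certificate_less_3 by auto
    ultimately have "level_measure F (map fst q) = F p (level (map fst q))" by (rule level_measure_eq)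
    moreover have "level (map fst q) \<le> 2"
      unfolding word using level_certificate[OF row_pattern_mem_patterns[OF T full r]] .
    ultimately show "level_measure F (map fst q) \<le> max (F p 1) (F p 2)"
      using level_cases[of "map fst q"] by auto
  qed
  finally show ?thesis .
qed

lemma cost_CA_le:
  assumes T: "T \<in> pattern_class"
  shows "cost F CA T \<le> max (F (block T) 1) (F (block T) 2)"
proof (cases "set (attrs T) = triple (block T)")
  case full: True
  show ?thesis
  proof (cases "rows T = []")
    case True
    then have "common_decision T" unfolding common_decision_def by simp
    then show ?thesis using cost_common_decision by simp
  next
    case False
    then show ?thesis using cost_CA_le_full[OF T full False] by simp
  qed
next
  case False
  then show ?thesis using cost_CD_le_partial[OF T False, of F] cost_CA_le_CD[OF T, of F] by simp
qed

section \<open>Witness tables\<close>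

definition empty_table :: "nat \<Rightarrow> nat dtable" where
  "empty_table p = \<lparr>attrs = [3 * p, 3 * p + 1, 3 * p + 2], rows = []\<rparr>"

definition two_row_table :: "nat \<Rightarrow> nat dtable" where
  "two_row_table p = \<lparr>attrs = [3 * p], rows = [([0], {0}), ([1], {1})]\<rparr>"

definition pattern_table :: "nat \<Rightarrow> nat dtable" where
  "pattern_table p = \<lparr>attrs = [3 * p, 3 * p + 1, 3 * p + 2],
     rows = [([0, 0, 0], {0}), ([0, 0, 1], {1}), ([1, 1, 1], {2}), ([2, 1, 1], {3}),
             ([1, 0, 2], {4}), ([1, 2, 2], {5})]\<rparr>"

lemma empty_table_mem: "empty_table p \<in> pattern_class"
proof -
  have "valid_table 3 (empty_table p)"
    by (rule valid_table_if_distinct_attrs) (simp_all add: empty_table_def)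
  moreover have "set (attrs (empty_table p)) \<subseteq> triple p" by (simp add: empty_table_def triple_def)
  moreover have "follows_patterns (empty_table p)"
    by (simp add: follows_patterns_def tuples_def empty_table_def)
  ultimately show ?thesis unfolding pattern_class_def by blast
qed

lemma two_row_table_mem: "two_row_table p \<in> pattern_class"
proof -
  have "valid_table 3 (two_row_table p)"
    by (rule valid_table_if_distinct_attrs) (simp_all add: two_row_table_def)
  moreover have "set (attrs (two_row_table p)) \<subseteq> triple p" by (simp add: two_row_table_def triple_def)
  moreover have "follows_patterns (two_row_table p)"
    unfolding follows_patterns_def tuples_def patterns_def two_row_table_def by auto
  ultimately show ?thesis unfolding pattern_class_def by blast
qed

lemma pattern_table_mem: "pattern_table p \<in> pattern_class"
proof -
  have "valid_table 3 (pattern_table p)"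
    by (rule valid_table_if_distinct_attrs) (simp_all add: pattern_table_def)
  moreover have "set (attrs (pattern_table p)) \<subseteq> triple p" by (simp add: pattern_table_def triple_def)
  moreover have "follows_patterns (pattern_table p)"
    unfolding follows_patterns_def
  proof
    fix r assume r: "r \<in> tuples (pattern_table p)"
    have "attrs (pattern_table p) ! i mod 3 = i" if "i < length (attrs (pattern_table p))" for i
    proof -
      have "attrs (pattern_table p) ! i = 3 * p + i"
        using that by (auto simp: pattern_table_def less_Suc_eq)
      then show ?thesis using that by (simp add: pattern_table_def)
    qed
    moreover have "r \<in> patterns" using r by (auto simp: pattern_table_def tuples_def patterns_def)
    ultimately show "\<exists>s \<in> patterns. \<forall>i < length (attrs (pattern_table p)).
        r ! i = s ! (attrs (pattern_table p) ! i mod 3)"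
      by (intro bexI[of _ r]) auto
  qed
  ultimately show ?thesis unfolding pattern_class_def by blast
qed

lemma block_witness [simp]:
  "block (empty_table p) = p" "block (two_row_table p) = p" "block (pattern_table p) = p"
  unfolding block_def empty_table_def two_row_table_def pattern_table_def by simp_all

lemma set_attrs_pattern_table: "set (attrs (pattern_table p)) = triple p"
  unfolding pattern_table_def triple_def by auto

lemma cost_empty_table:
  "cost F CI (empty_table p) = F p 4" "cost F CD (empty_table p) = 0" "cost F CA (empty_table p) = 0"
proof -
  have "set (attrs (empty_table p)) = triple p" unfolding empty_table_def triple_def by auto
  then show "cost F CI (empty_table p) = F p 4" using cost_CI[OF empty_table_mem] level_eq_4 by simp
  have "common_decision (empty_table p)" unfolding common_decision_def empty_table_def by simp
  then show "cost F CD (empty_table p) = 0" "cost F CA (empty_table p) = 0"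
    using cost_common_decision by blast+
qed

lemma cost_two_row_table: "cost F b (two_row_table p) = F p 1"
proof -
  have CI: "cost F CI (two_row_table p) = F p 1"
    using cost_CI[OF two_row_table_mem, of F p] by (simp add: two_row_table_def level_def block_def)
  have no_common: "\<not> common_decision (two_row_table p)"
    unfolding common_decision_def two_row_table_def by auto
  have "F p 1 \<le> cost F CA (two_row_table p)"
  proof (rule psi_of_CA_ge[OF pattern_class_valid[OF two_row_table_mem] _ no_common])
    fix w :: "nat list" assume w: "w \<noteq> []" "set w \<subseteq> set (attrs (two_row_table p))"
    then have "set w = {3 * p}" by (cases w) (auto simp: two_row_table_def)
    moreover have "hd w \<in> set w" using w(1) by simp
    ultimately show "F p 1 \<le> level_measure F w" using w(1) by (simp add: level_measure_def level_def)
  qed simp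
  then show ?thesis
    using cost_CA_le_CD[OF two_row_table_mem, of F p] cost_CD_le_CI[OF two_row_table_mem, of F p] CI
    by (cases b) (auto simp del: psi_of_CI)
qed

lemma attr_value_pattern_table:
  assumes "r \<in> tuples (pattern_table p)" "j < 3"
  shows "attr_value (pattern_table p) r (3 * p + j) = r ! j"
proof -
  have "attrs (pattern_table p) ! j = 3 * p + j"
    using assms(2) by (auto simp: pattern_table_def less_3_iff)
  then show ?thesis
    using nth_tuple_eq_attr_value[OF pattern_class_valid[OF pattern_table_mem] assms(1)] assms(2)
    by (simp add: pattern_table_def)
qed

lemma pattern_table_separating_rows:
  assumes "j < 3"
  obtains r1 D1 r2 D2 where
    "(r1, D1) \<in> set (rows (pattern_table p))" "(r2, D2) \<in> set (rows (pattern_table p))"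
    "D1 \<inter> D2 = {}" "\<And>i. i < 3 \<Longrightarrow> 3 * p + i \<noteq> partner (3 * p + j) \<Longrightarrow> r1 ! i = r2 ! i"
proof -
  from assms consider "j = 0" | "j = 1" | "j = 2" by linarith
  then show thesis
  proof cases
    case 1
    show thesis
      by (rule that[of "[0, 0, 0]" "{0}" "[0, 0, 1]" "{1}"])
        (auto simp: 1 pattern_table_def less_3_iff)
  next
    case 2
    show thesis
      by (rule that[of "[1, 1, 1]" "{2}" "[2, 1, 1]" "{3}"])
        (auto simp: 2 pattern_table_def less_3_iff)
  next
    case 3
    show thesis
      by (rule that[of "[1, 0, 2]" "{4}" "[1, 2, 2]" "{5}"])
        (auto simp: 3 pattern_table_def less_3_iff)
  qed
qed

text \<open>The root queries some f; the two rows separated only by the partner of f force a path that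
  queries f first and its partner later.\<close>
lemma cost_CD_pattern_table_ge:
  assumes F: "F p 3 \<le> F p 4"
  shows "F p 3 \<le> cost F CD (pattern_table p)"
proof -
  let ?T = "pattern_table p"
  have valid: "valid_table 3 ?T" using pattern_class_valid[OF pattern_table_mem] .
  obtain \<Gamma> where \<Gamma>: "det_tree_for 3 ?T \<Gamma>" "psi_tree (level_measure F) \<Gamma> = cost F CD ?T"
    using obtain_optimal_det_tree[OF valid] by auto
  have nondet: "nondet_tree_for 3 ?T \<Gamma>" using \<Gamma>(1) unfolding det_tree_for_def by simp
  obtain f where f: "f \<in> set (attrs ?T)"
    and root: "\<And>q d. cpath \<Gamma> q d \<Longrightarrow> q \<noteq> [] \<Longrightarrow> fst (hd q) = f"
    using det_tree_for_root_attr[OF valid \<Gamma>(1)] by blast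
  then obtain j where j: "j < 3" "f = 3 * p + j" using set_attrs_pattern_table unfolding triple_def by auto
  obtain r1 D1 r2 D2 where rows: "(r1, D1) \<in> set (rows ?T)" "(r2, D2) \<in> set (rows ?T)"
    and disjoint: "D1 \<inter> D2 = {}"
    and differ: "\<And>i. i < 3 \<Longrightarrow> 3 * p + i \<noteq> partner f \<Longrightarrow> r1 ! i = r2 ! i"
    using pattern_table_separating_rows[OF j(1)] j(2) by metis
  have "attr_value ?T r1 g = attr_value ?T r2 g" if g: "g \<in> set (attrs ?T)" "g \<noteq> partner f" for g
  proof -
    obtain i where "i < 3" "g = 3 * p + i" using g(1) set_attrs_pattern_table unfolding triple_def by auto
    then show ?thesis
      using differ g(2) attr_value_pattern_table[OF tuplesI] rows by simp
  qed
  then obtain q d where q: "cpath \<Gamma> q d" "partner f \<in> set (map fst q)"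
    using separating_attr_on_path[OF valid nondet rows disjoint] by blast
  then have "q \<noteq> []" by auto
  then have "hd (map fst q) = f" using root[OF q(1)] by (cases q) auto
  then have "3 \<le> level (map fst q)" using level_ge_3 q(2) by simp
  moreover have "level_measure F (map fst q) = F p (level (map fst q))"
    using \<open>q \<noteq> []\<close> nondet_tree_for_path_attrs[OF nondet q(1)] set_attrs_pattern_table
    by (intro level_measure_eq) auto
  ultimately have "F p 3 \<le> level_measure F (map fst q)"
    using level_cases[of "map fst q"] F by auto
  also have "\<dots> \<le> cost F CD ?T" using psi_tree_ge[OF q(1)] \<Gamma>(2) by metis
  finally show ?thesis .
qed

lemma cost_pattern_table:
  "cost F CI (pattern_table p) = F p 4" "cost F CA (pattern_table p) \<le> max (F p 1) (F p 2)"
  using cost_CI[OF pattern_table_mem] level_eq_4[OF set_attrs_pattern_table]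
    cost_CA_le[OF pattern_table_mem]
  by simp_all

definition cx_le :: "cx \<Rightarrow> cx \<Rightarrow> bool" where
  "cx_le b c \<longleftrightarrow> b = c \<or> c = CI \<or> (b = CA \<and> c = CD)"

lemma cost_mono: "T \<in> pattern_class \<Longrightarrow> cx_le b c \<Longrightarrow> cost F b T \<le> cost F c T"
  using cost_CA_le_CD[of T F] cost_CD_le_CI[of T F] unfolding cx_le_def
  by (cases b; cases c) (auto simp del: psi_of_CI)

lemma has_typ_CI_row:
  assumes "\<And>M. M \<le> F M 4"
  shows "has_typ (U 3 pattern_class (level_measure F) CI CI) T\<gamma>"
    and "has_typ (U 3 pattern_class (level_measure F) CI CD) T\<epsilon>"
    and "has_typ (U 3 pattern_class (level_measure F) CI CA) T\<epsilon>"
proof -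
  have empty: "empty_table M \<in> pattern_class \<and> M \<le> cost F CI (empty_table M) \<and>
      cost F CD (empty_table M) \<le> n \<and> cost F CA (empty_table M) \<le> n" for M n
    using empty_table_mem cost_empty_table assms by simp
  show "has_typ (U 3 pattern_class (level_measure F) CI CI) T\<gamma>"
    by (rule has_typ_gamma_if_diagonal_unbounded) (use empty in blast)+
  show "has_typ (U 3 pattern_class (level_measure F) CI CD) T\<epsilon>"
    by (rule has_typ_epsilon_if_unbounded[of 0]) (use empty in blast)
  show "has_typ (U 3 pattern_class (level_measure F) CI CA) T\<epsilon>"
    by (rule has_typ_epsilon_if_unbounded[of 0]) (use empty in blast)
qed

lemma has_typ_alpha_if_cost_bounded:
  "(\<And>T. T \<in> pattern_class \<Longrightarrow> cost F b T \<le> B) \<Longrightarrow>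
    has_typ (U 3 pattern_class (level_measure F) b c) T\<alpha>"
  using has_typ_alpha_if_bounded empty_table_mem by metis

lemma has_typ_gamma_by_two_row_tables:
  assumes "cx_le b c" and "\<And>M. M \<le> F (h M) 1"
  shows "has_typ (U 3 pattern_class (level_measure F) b c) T\<gamma>"
proof (rule has_typ_gamma_if_diagonal_unbounded)
  show "cost F b T \<le> cost F c T" if "T \<in> pattern_class" for T using cost_mono[OF that assms(1)] .
  show "\<exists>T \<in> pattern_class. M \<le> cost F c T \<and> cost F b T = cost F c T" for M
    using two_row_table_mem[of "h M"] cost_two_row_table assms(2) by metis
qed

lemma has_typ_CD_CA_epsilon_by_pattern_tables:
  assumes "\<And>M. M \<le> F (h M) 3" "\<And>M. F (h M) 3 \<le> F (h M) 4"
    and "\<And>M. F (h M) 1 \<le> 1" "\<And>M. F (h M) 2 \<le> 1"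
  shows "has_typ (U 3 pattern_class (level_measure F) CD CA) T\<epsilon>"
proof (rule has_typ_epsilon_if_unbounded[of 1])
  fix n M :: nat assume "1 \<le> n"
  then show "\<exists>T \<in> pattern_class. cost F CA T \<le> n \<and> M \<le> cost F CD T"
    using pattern_table_mem[of "h M"] cost_pattern_table(2)[of F "h M"]
      cost_CD_pattern_table_ge[of F "h M"] assms
    by (metis le_trans max.bounded_iff)
qed

section \<open>The seven t-pairs\<close>

definition weights :: "nat \<Rightarrow> nat \<Rightarrow> nat \<Rightarrow> nat" where
  "weights j p l =
    (if j = 1 then 0
     else if j = 2 then (if l = 4 then p else 1)
     else if j = 3 then (if l \<le> 2 then 1 else if l = 3 then p + 2 else p + 3)
     else if j = 4 \<or> j = 7 \<and> even p then (if l \<le> 2 then 1 else p + 2)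
     else if j = 5 \<or> j = 7 then p + 1
     else if l \<le> 2 then p + 1 else 2 * p + 2)"

abbreviation U_weights :: "nat \<Rightarrow> cx \<Rightarrow> cx \<Rightarrow> nat \<Rightarrow> nat option" where
  "U_weights j \<equiv> U 3 pattern_class (level_measure (weights j))"

lemma has_typ_t1: "has_typ (U_weights 1 b c) (ttab 1 b c)"
proof -
  have "cost (weights 1) b T \<le> 0" if "T \<in> pattern_class" for T
  proof -
    have "cost (weights 1) b T \<le> cost (weights 1) CI T"
      using cost_mono[OF that, where c = CI] by (simp add: cx_le_def)
    also have "\<dots> = 0" using cost_CI[OF that] by (simp add: weights_def)
    finally show ?thesis .
  qed
  then have "has_typ (U_weights 1 b c) T\<alpha>" by (rule has_typ_alpha_if_cost_bounded)
  then show ?thesis by (cases b; cases c) (simp_all add: ttab_def row3_def)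
qed

lemma has_typ_t2: "has_typ (U_weights 2 b c) (ttab 2 b c)"
proof -
  have D: "cost (weights 2) CD T \<le> 1" if T: "T \<in> pattern_class" for T
  proof (cases "set (attrs T) = triple (block T)")
    case True
    then show ?thesis using cost_CD_le_full[OF T True, of "weights 2"] by (simp add: weights_def)
  next
    case False
    then show ?thesis using cost_CD_le_partial[OF T False, of "weights 2"] by (simp add: weights_def)
  qed
  have A: "cost (weights 2) CA T \<le> 1" if "T \<in> pattern_class" for T
    using D[OF that] cost_CA_le_CD[OF that] by (rule order_trans[rotated])
  have "has_typ (U_weights 2 CD c) T\<alpha>" "has_typ (U_weights 2 CA c) T\<alpha>" for c
    using has_typ_alpha_if_cost_bounded D A by metis+
  then show ?thesis
    using has_typ_CI_row[of "weights 2"] by (cases b; cases c) (simp_all add: ttab_def row3_def weights_def)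
qed

lemma has_typ_t3: "has_typ (U_weights 3 b c) (ttab 3 b c)"
proof -
  let ?F = "weights 3"
  have pattern_CD: "M + 2 \<le> cost ?F CD (pattern_table M)" for M
    using cost_CD_pattern_table_ge[of ?F M] by (simp add: weights_def)
  have below: "cost ?F CD T \<le> 1 \<or> cost ?F CD T < cost ?F CI T" if T: "T \<in> pattern_class" for T
  proof (cases "set (attrs T) = triple (block T)")
    case True
    then show ?thesis
      using cost_CD_le_full[OF T True, of ?F] cost_CI[OF T, of ?F] level_eq_4[OF True]
      by (simp add: weights_def)
  next
    case False
    then show ?thesis using cost_CD_le_partial[OF T False, of ?F] by (simp add: weights_def)
  qed
  have DI: "has_typ (U_weights 3 CD CI) T\<beta>"
  proof (rule has_typ_beta_if_below_diagonal[OF _ empty_table_mem below])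
    show "cost ?F CD T \<le> cost ?F CI T" if "T \<in> pattern_class" for T using cost_CD_le_CI[OF that] .
    show "\<exists>T \<in> pattern_class. M \<le> cost ?F CD T" for M
      using pattern_CD[of M] by (intro bexI[OF _ pattern_table_mem[of M]]) simp
  qed
  have DD: "has_typ (U_weights 3 CD CD) T\<gamma>"
  proof (rule has_typ_gamma_if_diagonal_unbounded)
    show "\<exists>T \<in> pattern_class. M \<le> cost ?F CD T \<and> cost ?F CD T = cost ?F CD T" for M
      using pattern_CD[of M] by (intro bexI[OF _ pattern_table_mem[of M]]) simp
  qed simp
  have DA: "has_typ (U_weights 3 CD CA) T\<epsilon>"
    by (rule has_typ_CD_CA_epsilon_by_pattern_tables[where h = id]) (simp_all add: weights_def)
  have A: "has_typ (U_weights 3 CA c) T\<alpha>" for c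
    using cost_CA_le[of _ ?F] by (intro has_typ_alpha_if_cost_bounded[of _ _ 1]) (simp add: weights_def)
  show ?thesis
    using has_typ_CI_row[of ?F] DI DD DA A
    by (cases b; cases c) (simp_all add: ttab_def row3_def weights_def)
qed

lemma has_typ_t4: "has_typ (U_weights 4 b c) (ttab 4 b c)"
proof -
  let ?F = "weights 4"
  have pattern: "cost ?F CD (pattern_table M) = M + 2" "cost ?F CI (pattern_table M) = M + 2" for M
    using cost_CD_pattern_table_ge[of ?F M] cost_pattern_table(1)[of ?F M]
      cost_CD_le_CI[OF pattern_table_mem, of ?F M]
    by (simp_all add: weights_def)
  have DI: "has_typ (U_weights 4 CD CI) T\<gamma>"
  proof (rule has_typ_gamma_if_diagonal_unbounded)
    show "cost ?F CD T \<le> cost ?F CI T" if "T \<in> pattern_class" for T using cost_CD_le_CI[OF that] .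
    show "\<exists>T \<in> pattern_class. M \<le> cost ?F CI T \<and> cost ?F CD T = cost ?F CI T" for M
      using pattern[of M] by (intro bexI[OF _ pattern_table_mem[of M]]) simp
  qed
  have DD: "has_typ (U_weights 4 CD CD) T\<gamma>"
  proof (rule has_typ_gamma_if_diagonal_unbounded)
    show "\<exists>T \<in> pattern_class. M \<le> cost ?F CD T \<and> cost ?F CD T = cost ?F CD T" for M
      using pattern[of M] by (intro bexI[OF _ pattern_table_mem[of M]]) simp
  qed simp
  have DA: "has_typ (U_weights 4 CD CA) T\<epsilon>"
    by (rule has_typ_CD_CA_epsilon_by_pattern_tables[where h = id]) (simp_all add: weights_def)
  have A: "has_typ (U_weights 4 CA c) T\<alpha>" for c
    using cost_CA_le[of _ ?F] by (intro has_typ_alpha_if_cost_bounded[of _ _ 1]) (simp add: weights_def)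
  show ?thesis
    using has_typ_CI_row[of ?F] DI DD DA A
    by (cases b; cases c) (simp_all add: ttab_def row3_def weights_def)
qed

lemma has_typ_t5: "has_typ (U_weights 5 b c) (ttab 5 b c)"
proof -
  let ?F = "weights 5"
  have gamma: "has_typ (U_weights 5 b c) T\<gamma>" if "cx_le b c" for b c
    using that by (rule has_typ_gamma_by_two_row_tables[where h = id]) (simp add: weights_def)
  have CD_le_CA: "cost ?F CD T \<le> cost ?F CA T" if T: "T \<in> pattern_class" for T
  proof (cases "common_decision T")
    case True
    then show ?thesis using cost_common_decision by simp
  next
    case False
    have "cost ?F CD T \<le> block T + 1"
      using cost_CD_le_CI[OF T, of ?F] cost_CI[OF T, of ?F] by (simp add: weights_def)
    also have "\<dots> \<le> cost ?F CA T" by (rule cost_CA_ge[OF T False]) (simp add: weights_def)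
    finally show ?thesis .
  qed
  have DA: "has_typ (U_weights 5 CD CA) T\<gamma>"
  proof (rule has_typ_gamma_if_diagonal_unbounded[OF CD_le_CA])
    show "\<exists>T \<in> pattern_class. M \<le> cost ?F CA T \<and> cost ?F CD T = cost ?F CA T" for M
      using cost_two_row_table[of ?F _ M] by (intro bexI[OF _ two_row_table_mem[of M]]) (simp add: weights_def)
  qed
  show ?thesis
    using has_typ_CI_row[of ?F] gamma DA
    by (cases b; cases c) (simp_all add: ttab_def row3_def weights_def cx_le_def)
qed

lemma has_typ_t6: "has_typ (U_weights 6 b c) (ttab 6 b c)"
proof -
  let ?F = "weights 6"
  have gamma: "has_typ (U_weights 6 b c) T\<gamma>" if "cx_le b c" for b c
    using that by (rule has_typ_gamma_by_two_row_tables[where h = id]) (simp add: weights_def)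
  have CD_le: "cost ?F CD T \<le> 2 * n" if T: "T \<in> pattern_class" and CA: "cost ?F CA T \<le> n" for T n
  proof (cases "common_decision T")
    case True
    then show ?thesis using cost_common_decision by simp
  next
    case False
    have "block T + 1 \<le> cost ?F CA T" by (rule cost_CA_ge[OF T False]) (simp add: weights_def)
    moreover have "cost ?F CD T \<le> 2 * block T + 2"
      using cost_CD_le_CI[OF T, of ?F] cost_CI[OF T, of ?F] by (simp add: weights_def split: if_splits)
    ultimately show ?thesis using CA by simp
  qed
  have DA: "has_typ (U_weights 6 CD CA) T\<delta>"
  proof (rule has_typ_delta_if_above_diagonal[OF CD_le empty_table_mem])
    show "cost ?F CA (empty_table 0) = 0" by (rule cost_empty_table)
    fix n :: nat assume "1 \<le> n"
    then show "\<exists>T \<in> pattern_class. cost ?F CA T \<le> n \<and> n < cost ?F CD T"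
      using cost_pattern_table(2)[of ?F "n - 1"] cost_CD_pattern_table_ge[of ?F "n - 1"]
      by (intro bexI[OF _ pattern_table_mem[of "n - 1"]]) (simp add: weights_def)
  qed
  show ?thesis
    using has_typ_CI_row[of ?F] gamma DA
    by (cases b; cases c) (simp_all add: ttab_def row3_def weights_def cx_le_def)
qed

lemma has_typ_t7: "has_typ (U_weights 7 b c) (ttab 7 b c)"
proof -
  let ?F = "weights 7"
  have gamma: "has_typ (U_weights 7 b c) T\<gamma>" if "cx_le b c" for b c
    using that by (rule has_typ_gamma_by_two_row_tables[where h = "\<lambda>M. 2 * M + 1"]) (simp add: weights_def)
  have DA: "has_typ (U_weights 7 CD CA) T\<epsilon>"
    by (rule has_typ_CD_CA_epsilon_by_pattern_tables[where h = "\<lambda>M. 2 * M"]) (simp_all add: weights_def)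
  show ?thesis
    using has_typ_CI_row[of ?F] gamma DA
    by (cases b; cases c) (simp_all add: ttab_def row3_def weights_def cx_le_def)
qed

theorem proposition3:
  assumes "j \<in> {1..7::nat}"
  shows "\<exists>k::nat. k \<ge> 2 \<and> (\<exists>(C :: nat dtable set) (\<psi> :: nat list \<Rightarrow> nat).
           closed_class k C \<and> (\<forall>b c. has_typ (U k C \<psi> b c) (ttab j b c)))"
proof -
  have "has_typ (U_weights j b c) (ttab j b c)" for b c
    using assms has_typ_t1 has_typ_t2 has_typ_t3 has_typ_t4 has_typ_t5 has_typ_t6 has_typ_t7
    by (auto simp: le_Suc_eq numeral_eq_Suc)
  then show ?thesis using closed_class_pattern_class by (intro exI[of _ 3]) auto
qed

end
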